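(* Let $G$ be a finite group and $H\trianglelefteq G$ a normal subgroup with a surjection $H\to\Gamma$, where $\Gamma$, $\Phi$, $\Psi$, $X$ are as in the context, and regard $X$ as a representation of $H$ via this surjection. Let $N\subseteq G$ be as in the context, so $H\subseteq N\subseteq G$. (1) If $U\subseteq\mathrm{Ind}_H^NX$ is an irreducible representation of $N$, then $\mathrm{Ind}_N^GU$ is an irreducible representation of $G$. (2) If $V'\subseteq\mathrm{Ind}_H^GX$ is an irreducible representation of $G$, then there is an irreducible $N$-subrepresentation $U\subseteq\mathrm{Ind}_H^NX$ with $V'\cong\mathrm{Ind}_N^GU$.
   Context: All representations are over an algebraically closed field $E$ of characteristic zero. $V$ is a two-dimensional $E$-vector space and $\Gamma\subset\mathrm{PGL}(V)$ is a finite subgroup acting irreducibly on $\mathbf P(V)$ (so $\Gamma\cong A_4,S_4,A_5$ or $D_n$ of order $2n$, $n\ge3$ odd), with projective representation $\Phi$. $W$ is the space of trace-zero endomorphisms of $V$ with $\Gamma$ acting by conjugation; $X\subseteq W$ is the unique $\Gamma$-stable subspace on which $\Gamma$ acts irreducibly and faithfully ($X=W$ unless $\Gamma\cong D_n$, in which case $W=X\oplus\epsilon$, $\epsilon$ the quadratic character, $\dim X=2$); $\Psi$ is the linear representation of $\Gamma$ on $X$. Let $\mathrm{Ker}$ be the kernel of $H\to\Gamma$, $N(\mathrm{Ker})$ its normalizer in $G$, and $N(\mathrm{Ker})\to\mathrm{Aut}(\Gamma)$ the map induced by conjugation. $N$ is the preimage of $\mathrm{Aut}_\Psi(\Gamma)=\{\alpha\in\mathrm{Aut}(\Gamma):\Psi\circ\alpha\cong\Psi\}$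 (equivalently of $\mathrm{Aut}_\Phi(\Gamma)$) under this map. *)

theory Defs
  imports "HOL-Analysis.Analysis" "HOL-Algebra.Algebra" "HOL-Algebra.Group_Action"
    "HOL-Library.Function_Algebras" "HOL-Computational_Algebra.Polynomial"
begin

definition alg_closed :: "'e::field itself \<Rightarrow> bool" where
  "alg_closed _ \<longleftrightarrow> (\<forall>p :: 'e Polynomial.poly. Polynomial.degree p \<ge> 1 \<longrightarrow> (\<exists>x. Polynomial.poly p x = 0))"

definition mscale :: "'e::field \<Rightarrow> 'e^2^2 \<Rightarrow> 'e^2^2" where
  "mscale c M = (\<chi> i j. c * M $ i $ j)"

text \<open>The element of PGL(V) determined by an invertible matrix: its class modulo nonzero scalars.\<close>
definition pcls :: "'e::field^2^2 \<Rightarrow> ('e^2^2) set" where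
  "pcls A = {mscale c A | c. c \<noteq> 0}"

definition prep :: "('e::field^2^2) set \<Rightarrow> 'e^2^2" where
  "prep a = (SOME A. A \<in> a)"

definition PGL2 :: "('e::field^2^2) set monoid" where
  "PGL2 = \<lparr> carrier = pcls ` {A. invertible A},
            mult = (\<lambda>a b. pcls (prep a ** prep b)),
            one = pcls (mat 1) \<rparr>"

text \<open>Gamma acts irreducibly on P(V): no line of V is fixed by all of Gamma.\<close>
definition proj_irreducible :: "('e::field^2^2) set set \<Rightarrow> bool" where
  "proj_irreducible Gm \<longleftrightarrow>
     \<not> (\<exists>v::'e^2. v \<noteq> 0 \<and> (\<forall>a\<in>Gm. \<exists>c. prep a *v v = c *s v))"

definition Wsp :: "('e::field^2^2) set" where
  "Wsp = {M. trace M = 0}"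

definition psi :: "('e::field^2^2) set \<Rightarrow> 'e^2^2 \<Rightarrow> 'e^2^2" where
  "psi a M = prep a ** M ** matrix_inv (prep a)"

definition is_subspace :: "('e::field \<Rightarrow> 'v::ab_group_add \<Rightarrow> 'v) \<Rightarrow> 'v set \<Rightarrow> bool" where
  "is_subspace sc S \<longleftrightarrow> 0 \<in> S \<and> (\<forall>x\<in>S. \<forall>y\<in>S. x + y \<in> S) \<and> (\<forall>c. \<forall>x\<in>S. sc c x \<in> S)"

definition is_rep ::
  "('e::field \<Rightarrow> 'v::ab_group_add \<Rightarrow> 'v) \<Rightarrow> ('g, 'm) monoid_scheme \<Rightarrow> ('g \<Rightarrow> 'v \<Rightarrow> 'v) \<Rightarrow> 'v set \<Rightarrow> bool" where
  "is_rep sc K \<rho> S \<longleftrightarrow> is_subspace sc S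
     \<and> (\<forall>k\<in>carrier K. \<forall>v\<in>S. \<rho> k v \<in> S)
     \<and> (\<forall>k\<in>carrier K. \<forall>x\<in>S. \<forall>y\<in>S. \<rho> k (x + y) = \<rho> k x + \<rho> k y)
     \<and> (\<forall>k\<in>carrier K. \<forall>c. \<forall>x\<in>S. \<rho> k (sc c x) = sc c (\<rho> k x))
     \<and> (\<forall>v\<in>S. \<rho> \<one>\<^bsub>K\<^esub> v = v)
     \<and> (\<forall>k\<in>carrier K. \<forall>l\<in>carrier K. \<forall>v\<in>S. \<rho> (k \<otimes>\<^bsub>K\<^esub> l) v = \<rho> k (\<rho> l v))"

definition invariant_subspace ::
  "('e::field \<Rightarrow> 'v::ab_group_add \<Rightarrow> 'v) \<Rightarrow> ('g, 'm) monoid_scheme \<Rightarrow> ('g \<Rightarrow> 'v \<Rightarrow> 'v) \<Rightarrow> 'v set \<Rightarrow> 'v set \<Rightarrow> bool" where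
  "invariant_subspace sc K \<rho> S T \<longleftrightarrow> T \<subseteq> S \<and> is_subspace sc T \<and> (\<forall>k\<in>carrier K. \<forall>v\<in>T. \<rho> k v \<in> T)"

definition irred_rep ::
  "('e::field \<Rightarrow> 'v::ab_group_add \<Rightarrow> 'v) \<Rightarrow> ('g, 'm) monoid_scheme \<Rightarrow> ('g \<Rightarrow> 'v \<Rightarrow> 'v) \<Rightarrow> 'v set \<Rightarrow> bool" where
  "irred_rep sc K \<rho> S \<longleftrightarrow> is_rep sc K \<rho> S \<and> S \<noteq> {0}
     \<and> (\<forall>T. invariant_subspace sc K \<rho> S T \<longrightarrow> T = {0} \<or> T = S)"

definition rep_iso ::
  "('e::field \<Rightarrow> 'v::ab_group_add \<Rightarrow> 'v) \<Rightarrow> ('e \<Rightarrow> 'w::ab_group_add \<Rightarrow> 'w) \<Rightarrow> ('g, 'm) monoid_scheme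
   \<Rightarrow> ('g \<Rightarrow> 'v \<Rightarrow> 'v) \<Rightarrow> 'v set \<Rightarrow> ('g \<Rightarrow> 'w \<Rightarrow> 'w) \<Rightarrow> 'w set \<Rightarrow> bool" where
  "rep_iso sc1 sc2 K \<rho>1 S1 \<rho>2 S2 \<longleftrightarrow> (\<exists>T. bij_betw T S1 S2
     \<and> (\<forall>x\<in>S1. \<forall>y\<in>S1. T (x + y) = T x + T y)
     \<and> (\<forall>c. \<forall>x\<in>S1. T (sc1 c x) = sc2 c (T x))
     \<and> (\<forall>k\<in>carrier K. \<forall>x\<in>S1. T (\<rho>1 k x) = \<rho>2 k (T x)))"

definition fscale :: "('e \<Rightarrow> 'v \<Rightarrow> 'v) \<Rightarrow> 'e \<Rightarrow> ('g \<Rightarrow> 'v) \<Rightarrow> ('g \<Rightarrow> 'v)" where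
  "fscale sc c f = (\<lambda>x. sc c (f x))"

text \<open>For subgroups K \<subseteq> L of G and a representation (S, rho) of K,
  Ind_K^L S = {f : L \<rightarrow> S | f(k x) = rho(k) f(x) for k in K}
  (functions extended by 0 outside L), with L acting by right translation.\<close>
definition ind_space ::
  "('g, 'm) monoid_scheme \<Rightarrow> 'g set \<Rightarrow> 'g set \<Rightarrow> ('g \<Rightarrow> 'v::zero \<Rightarrow> 'v) \<Rightarrow> 'v set \<Rightarrow> ('g \<Rightarrow> 'v) set" where
  "ind_space G K L \<rho> S = {f. (\<forall>x. x \<notin> L \<longrightarrow> f x = 0) \<and> (\<forall>x\<in>L. f x \<in> S)
       \<and> (\<forall>k\<in>K. \<forall>x\<in>L. f (k \<otimes>\<^bsub>G\<^esub> x) = \<rho> k (f x))}"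

definition ind_act :: "('g, 'm) monoid_scheme \<Rightarrow> 'g set \<Rightarrow> 'g \<Rightarrow> ('g \<Rightarrow> 'v::zero) \<Rightarrow> ('g \<Rightarrow> 'v)" where
  "ind_act G L l f = (\<lambda>x. if x \<in> L then f (x \<otimes>\<^bsub>G\<^esub> l) else 0)"

definition dih_rot :: "nat \<Rightarrow> nat \<Rightarrow> nat" where
  "dih_rot n i = (if i \<in> {1..n} then (i mod n) + 1 else i)"

definition dih_refl :: "nat \<Rightarrow> nat \<Rightarrow> nat" where
  "dih_refl n i = (if i \<in> {1..n} then n + 1 - i else i)"

text \<open>D_n (order 2n) as the symmetry group of the n-gon inside S_n.\<close>
definition dihedral_group :: "nat \<Rightarrow> (nat \<Rightarrow> nat) monoid" where
  "dihedral_group n = (sym_group n)\<lparr> carrier := generate (sym_group n) {dih_rot n, dih_refl n} \<rparr>"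

definition Aut_Psi :: "('e::field^2^2) set set \<Rightarrow> ('e^2^2) set \<Rightarrow> (('e^2^2) set \<Rightarrow> ('e^2^2) set) set" where
  "Aut_Psi Gm Xs = {\<sigma> \<in> iso (PGL2\<lparr>carrier := Gm\<rparr>) (PGL2\<lparr>carrier := Gm\<rparr>).
       rep_iso mscale mscale (PGL2\<lparr>carrier := Gm\<rparr>) (\<lambda>a. psi (\<sigma> a)) Xs psi Xs}"

text \<open>The automorphism of Gamma induced by conjugation by g \<in> N(Ker):
  pi(h) \<mapsto> pi(g h g^-1).\<close>
definition conj_aut :: "('g, 'm) monoid_scheme \<Rightarrow> 'g set \<Rightarrow> ('g \<Rightarrow> 'a) \<Rightarrow> 'g \<Rightarrow> 'a \<Rightarrow> 'a" where
  "conj_aut G H \<pi> g a = \<pi> (g \<otimes>\<^bsub>G\<^esub> (SOME h. h \<in> H \<and> \<pi> h = a) \<otimes>\<^bsub>G\<^esub> inv\<^bsub>G\<^esub> g)"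

definition Nsub :: "('g, 'm) monoid_scheme \<Rightarrow> 'g set \<Rightarrow> ('g \<Rightarrow> ('e::field^2^2) set)
     \<Rightarrow> ('e^2^2) set set \<Rightarrow> ('e^2^2) set \<Rightarrow> 'g set" where
  "Nsub G H \<pi> Gm Xs =
     {g \<in> normalizer G (kernel (G\<lparr>carrier := H\<rparr>) (PGL2\<lparr>carrier := Gm\<rparr>) \<pi>).
        conj_aut G H \<pi> g \<in> Aut_Psi Gm Xs}"

end

theory Submission
  imports Defs
begin

(*
  Write X^z(h) = X(z h z^-1) for the conjugate representation and N = Nsub G H pi Gamma Xs.
  1. N consists exactly of the z in G with X^z isomorphic to X as H-representations
     (N_iff); hence N is a subgroup of G containing H.
  2. Separation by matrix coefficients: for v <> 0 in X some element sum_h c(h) h of the group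
     algebra of H annihilates X^z for every z outside N (averaging and Schur's lemma, since
     X^z is not isomorphic to X there) but not v.  Acting with it on an element of Ind_H^G X
     cuts the element down to N without losing its value at 1 (cutoff_to_N).
  3. Part (1): an invariant subspace T of Ind_N^G U is determined by its "local part" at 1;
     the cut-off shows that the local part of T <> 0 is nonzero, hence all of U, hence T is
     everything (ind_irred_criterion).
  4. Part (2): Res_N V' is irreducible by the same cut-off argument, and the Frobenius map
     V' -> Ind_N^G (Res_N V') is a nonzero intertwiner between irreducible representations,
     hence an isomorphism by Schur's lemma.
*)

lemma mscale_entry [simp]: "mscale c A $ i $ j = c * A $ i $ j"
  by (simp add: mscale_def)

lemma mat_eqI: "(\<And>i j. A $ i $ j = B $ i $ j) \<Longrightarrow> A = B"
  by (simp add: vec_eq_iff)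

lemma sum_entry: "(\<Sum>x\<in>A. f x) $ i $ j = (\<Sum>x\<in>A. f x $ i $ j)"
  by (simp add: sum_component)

lemma vector_space_mscale: "vector_space (mscale :: 'e::field \<Rightarrow> 'e^2^2 \<Rightarrow> 'e^2^2)"
  by unfold_locales (simp_all add: vec_eq_iff algebra_simps)

interpretation mscale: vector_space "mscale :: 'e::field \<Rightarrow> 'e^2^2 \<Rightarrow> 'e^2^2"
  by (rule vector_space_mscale)

lemma mscale_mult_left: "mscale c A ** B = mscale c (A ** B)"
  by (simp add: mscale_def matrix_matrix_mult_def vec_eq_iff sum_distrib_left mult.assoc)

lemma mscale_mult_right: "A ** mscale c B = mscale c (A ** B)"
  by (simp add: mscale_def matrix_matrix_mult_def vec_eq_iff sum_distrib_left mult_ac)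

lemma pcls_mscale:
  assumes c: "(c::'e::field) \<noteq> 0"
  shows "pcls (mscale c A) = pcls A"
proof
  show "pcls (mscale c A) \<subseteq> pcls A"
  proof
    fix x assume "x \<in> pcls (mscale c A)"
    then obtain d where "d \<noteq> 0" "x = mscale (d * c) A" by (auto simp: pcls_def)
    then show "x \<in> pcls A" using c unfolding pcls_def by auto
  qed
  show "pcls A \<subseteq> pcls (mscale c A)"
  proof
    fix x assume "x \<in> pcls A"
    then obtain d where "d \<noteq> 0" "x = mscale (d / c) (mscale c A)" using c by (auto simp: pcls_def)
    then show "x \<in> pcls (mscale c A)" using c unfolding pcls_def by (intro CollectI exI[of _ "d / c"]) simp
  qed
qed

lemma PGL2_carrierD:
  assumes "a \<in> carrier (PGL2::('e::field^2^2) set monoid)"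
  shows "prep a \<in> a" "invertible (prep a)" "pcls (prep a) = a"
proof -
  obtain A where A: "invertible A" "a = pcls A" using assms by (auto simp: PGL2_def)
  have "A \<in> a" unfolding A(2) pcls_def by (rule CollectI, rule exI[of _ 1]) simp
  then show pa: "prep a \<in> a" unfolding prep_def by (rule someI)
  then obtain c where c: "c \<noteq> 0" "prep a = mscale c A" using A by (auto simp: pcls_def)
  obtain B where B: "A ** B = mat 1" "B ** A = mat 1" using A(1) unfolding invertible_def by blast
  have "prep a ** mscale (1/c) B = mat 1" "mscale (1/c) B ** prep a = mat 1"
    using c B by (simp_all add: mscale_mult_left mscale_mult_right)
  then show "invertible (prep a)" unfolding invertible_def by blast
  show "pcls (prep a) = a" using c A pcls_mscale by metis
qed

text \<open>The class of the identity is a right unit of \<open>PGL(2)\<close>; this is all we need of its group law.\<close>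
lemma PGL2_r_one:
  assumes "a \<in> carrier (PGL2::('e::field^2^2) set monoid)"
  shows "a \<otimes>\<^bsub>PGL2\<^esub> \<one>\<^bsub>PGL2\<^esub> = a"
proof -
  have "invertible (mat 1::'e^2^2)" unfolding invertible_def by (rule exI[of _ "mat 1"]) simp
  then have "pcls (mat 1) \<in> carrier (PGL2::('e^2^2) set monoid)" by (simp add: PGL2_def)
  then have "prep (pcls (mat 1)) \<in> pcls (mat 1::'e^2^2)" by (rule PGL2_carrierD)
  then obtain c where c: "c \<noteq> 0" "prep (pcls (mat 1)) = mscale c (mat 1::'e^2^2)"
    by (auto simp: pcls_def)
  have "a \<otimes>\<^bsub>PGL2\<^esub> \<one>\<^bsub>PGL2\<^esub> = pcls (mscale c (prep a))"
    using c(2) by (simp add: PGL2_def mscale_mult_right)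
  also have "\<dots> = a" using c(1) pcls_mscale PGL2_carrierD(3)[OF assms] by metis
  finally show ?thesis .
qed

lemma psi_add: "psi a (M + M') = psi a M + psi a M'"
  unfolding psi_def
  by (simp add: matrix_matrix_mult_def vec_eq_iff sum.distrib distrib_right distrib_left)

lemma psi_zero [simp]: "psi a 0 = 0"
  by (simp add: psi_def)

lemma psi_scale: "psi a (mscale c M) = mscale c (psi a M)"
  by (simp add: psi_def mscale_mult_left mscale_mult_right)

lemma psi_sum: "psi a (sum f A) = (\<Sum>x\<in>A. psi a (f x))"
  by (induction A rule: infinite_finite_induct) (simp_all add: psi_add)

lemma psi_inj:
  assumes "a \<in> carrier (PGL2::('e::field^2^2) set monoid)" "psi a M = psi a M'"
  shows "M = M'"
proof -
  let ?P = "prep a"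
  have "\<exists>A'. ?P ** A' = mat 1 \<and> A' ** ?P = mat 1"
    using PGL2_carrierD(2)[OF assms(1)] unfolding invertible_def by blast
  then have inv: "matrix_inv ?P ** ?P = mat 1" unfolding matrix_inv_def by (rule someI2_ex) blast
  have "matrix_inv ?P ** psi a Y ** ?P = Y" for Y
  proof -
    have "matrix_inv ?P ** psi a Y ** ?P = (matrix_inv ?P ** ?P) ** Y ** (matrix_inv ?P ** ?P)"
      unfolding psi_def by (simp only: matrix_mul_assoc)
    then show ?thesis unfolding inv by simp
  qed
  then show ?thesis using assms(2) by metis
qed

lemma sum_fun_apply: "(\<Sum>i\<in>A. f i) x = (\<Sum>i\<in>A. f i x)"
  by (induction A rule: infinite_finite_induct) simp_all

lemma fscale_apply [simp]: "fscale sc c f x = sc c (f x)"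
  by (simp add: fscale_def)

lemma vector_space_fscale:
  assumes "vector_space sc"
  shows "vector_space (fscale sc)"
proof -
  interpret vector_space sc by fact
  show ?thesis
    by unfold_locales (simp_all add: fscale_def fun_eq_iff scale_right_distrib scale_left_distrib)
qed

lemma fun_nonzeroE:
  assumes "f \<noteq> 0"
  obtains x where "f x \<noteq> 0"
  using assms by (auto simp: fun_eq_iff)

lemma (in vector_space) sum_representation_superset:
  assumes "independent B" "v \<in> span B" "finite F" "{b. representation B v b \<noteq> 0} \<subseteq> F"
  shows "(\<Sum>b\<in>F. representation B v b *s b) = v"
proof -
  have "(\<Sum>b\<in>F. representation B v b *s b) = (\<Sum>b | representation B v b \<noteq> 0. representation B v b *s b)"
    by (rule sum.mono_neutral_right) (use assms in auto)
  also have "\<dots> = v" by (rule sum_nonzero_representation_eq[OF assms(1,2)])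
  finally show ?thesis .
qed

lemma (in vector_space) representation_linear_combination:
  assumes "independent B" "\<And>i. i \<in> I \<Longrightarrow> v i \<in> span B"
  shows "representation B (\<Sum>i\<in>I. c i *s v i) b = (\<Sum>i\<in>I. c i * representation B (v i) b)"
proof -
  have "representation B (\<Sum>i\<in>I. c i *s v i) = (\<lambda>b. \<Sum>i\<in>I. representation B (c i *s v i) b)"
    by (rule representation_sum[OF assms(1)]) (rule span_scale[OF assms(2)])
  then show ?thesis using representation_scale[OF assms(1) assms(2)] by simp
qed

lemma is_subspaceD:
  assumes "is_subspace sc S"
  shows "0 \<in> S" "x \<in> S \<Longrightarrow> y \<in> S \<Longrightarrow> x + y \<in> S" "x \<in> S \<Longrightarrow> sc c x \<in> S"
  using assms unfolding is_subspace_def by auto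

lemma is_subspace_sum:
  assumes "is_subspace sc S" "\<And>i. i \<in> I \<Longrightarrow> f i \<in> S"
  shows "sum f I \<in> S"
  using assms unfolding is_subspace_def by (induction I rule: infinite_finite_induct) auto

lemma is_repD:
  assumes "is_rep sc K \<rho> S"
  shows "is_subspace sc S"
    and "k \<in> carrier K \<Longrightarrow> v \<in> S \<Longrightarrow> \<rho> k v \<in> S"
    and "k \<in> carrier K \<Longrightarrow> x \<in> S \<Longrightarrow> y \<in> S \<Longrightarrow> \<rho> k (x + y) = \<rho> k x + \<rho> k y"
    and "k \<in> carrier K \<Longrightarrow> x \<in> S \<Longrightarrow> \<rho> k (sc c x) = sc c (\<rho> k x)"
    and "v \<in> S \<Longrightarrow> \<rho> \<one>\<^bsub>K\<^esub> v = v"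
    and "k \<in> carrier K \<Longrightarrow> l \<in> carrier K \<Longrightarrow> v \<in> S \<Longrightarrow> \<rho> (k \<otimes>\<^bsub>K\<^esub> l) v = \<rho> k (\<rho> l v)"
  using assms unfolding is_rep_def by auto

lemma is_rep_zero:
  fixes S :: "'v::ab_group_add set"
  assumes "is_rep sc K \<rho> S" "k \<in> carrier K"
  shows "\<rho> k 0 = 0"
proof -
  have "0 \<in> S" using is_subspaceD(1)[OF is_repD(1)[OF assms(1)]] .
  then have "\<rho> k (0 + 0) = \<rho> k 0 + \<rho> k 0" using is_repD(3)[OF assms] by blast
  then show ?thesis by simp
qed

lemma irred_repD:
  assumes "irred_rep sc K \<rho> S"
  shows "is_rep sc K \<rho> S" "S \<noteq> {0}"
    and "invariant_subspace sc K \<rho> S T \<Longrightarrow> T \<noteq> {0} \<Longrightarrow> T = S"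
  using assms unfolding irred_rep_def by auto

lemma intertwiner_image_invariant:
  assumes rep1: "is_rep sc1 K \<rho>1 S1"
    and T_in: "\<And>x. x \<in> S1 \<Longrightarrow> T x \<in> S2"
    and T_add: "\<And>x y. x \<in> S1 \<Longrightarrow> y \<in> S1 \<Longrightarrow> T (x + y) = T x + T y"
    and T_scale: "\<And>c x. x \<in> S1 \<Longrightarrow> T (sc1 c x) = sc2 c (T x)"
    and T_comm: "\<And>k x. k \<in> carrier K \<Longrightarrow> x \<in> S1 \<Longrightarrow> T (\<rho>1 k x) = \<rho>2 k (T x)"
  shows "invariant_subspace sc2 K \<rho>2 S2 (T ` S1)"
  unfolding invariant_subspace_def is_subspace_def
proof (intro conjI ballI allI)
  note S1 = is_subspaceD[OF is_repD(1)[OF rep1]]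
  show "T ` S1 \<subseteq> S2" using T_in by blast
  have "T 0 = 0" using T_add[OF S1(1) S1(1)] by simp
  then show "0 \<in> T ` S1" using S1(1) by (metis image_eqI)
  show "x + y \<in> T ` S1" if xy: "x \<in> T ` S1" "y \<in> T ` S1" for x y
  proof -
    obtain a b where "a \<in> S1" "b \<in> S1" "x = T a" "y = T b" using xy by blast
    then show ?thesis using S1(2) T_add by (metis image_eqI)
  qed
  show "sc2 c x \<in> T ` S1" if x: "x \<in> T ` S1" for c x
  proof -
    obtain a where "a \<in> S1" "x = T a" using x by blast
    then show ?thesis using S1(3) T_scale by (metis image_eqI)
  qed
  show "\<rho>2 k x \<in> T ` S1" if k: "k \<in> carrier K" and x: "x \<in> T ` S1" for k x
  proof -
    obtain a where "a \<in> S1" "x = T a" using x by blast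
    then show ?thesis using k is_repD(2)[OF rep1] T_comm by (metis image_eqI)
  qed
qed

text \<open>Schur's lemma: a nonzero intertwining linear map between irreducible representations
  of the same group is an isomorphism (its kernel is a proper and its image a nonzero
  invariant subspace).\<close>
lemma schur_iso:
  assumes vs1: "vector_space sc1" and vs2: "vector_space sc2"
    and irr1: "irred_rep sc1 K \<rho>1 S1" and irr2: "irred_rep sc2 K \<rho>2 S2"
    and T_in: "\<And>x. x \<in> S1 \<Longrightarrow> T x \<in> S2"
    and T_add: "\<And>x y. x \<in> S1 \<Longrightarrow> y \<in> S1 \<Longrightarrow> T (x + y) = T x + T y"
    and T_scale: "\<And>c x. x \<in> S1 \<Longrightarrow> T (sc1 c x) = sc2 c (T x)"
    and T_comm: "\<And>k x. k \<in> carrier K \<Longrightarrow> x \<in> S1 \<Longrightarrow> T (\<rho>1 k x) = \<rho>2 k (T x)"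
    and nonzero: "x0 \<in> S1" "T x0 \<noteq> 0"
  shows "rep_iso sc1 sc2 K \<rho>1 S1 \<rho>2 S2"
proof -
  interpret v1: vector_space sc1 by (rule vs1)
  interpret v2: vector_space sc2 by (rule vs2)
  note rep1 = is_repD[OF irred_repD(1)[OF irr1]]
  note S1 = is_subspaceD[OF rep1(1)]
  have T0: "T 0 = 0" using T_add[OF S1(1) S1(1)] by simp
  have diff: "x - y \<in> S1 \<and> T (x - y) = T x - T y" if "x \<in> S1" "y \<in> S1" for x y
  proof -
    have "x + sc1 (-1) y \<in> S1" using that S1 by blast
    moreover have "T (x + sc1 (-1) y) = T x + sc2 (-1) (T y)"
      using T_add[OF that(1) S1(3)[OF that(2)]] T_scale[OF that(2)] by (simp only:)
    ultimately show ?thesis by simp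
  qed
  have "invariant_subspace sc1 K \<rho>1 S1 {x \<in> S1. T x = 0}"
    unfolding invariant_subspace_def is_subspace_def
    using S1 T0 T_add T_scale T_comm rep1(2) is_rep_zero[OF irred_repD(1)[OF irr2]] by auto
  moreover have "{x \<in> S1. T x = 0} \<noteq> S1" using nonzero by blast
  ultimately have ker: "{x \<in> S1. T x = 0} = {0}" using irred_repD(3)[OF irr1] by blast
  have "inj_on T S1"
  proof (rule inj_onI)
    fix x y assume "x \<in> S1" "y \<in> S1" "T x = T y"
    then have "x - y \<in> {x \<in> S1. T x = 0}" using diff by simp
    then show "x = y" using ker by simp
  qed
  moreover have "T ` S1 = S2"
  proof (rule irred_repD(3)[OF irr2])
    show "invariant_subspace sc2 K \<rho>2 S2 (T ` S1)"
      using irred_repD(1)[OF irr1] T_in T_add T_scale T_comm by (rule intertwiner_image_invariant)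
    show "T ` S1 \<noteq> {0}" using nonzero by blast
  qed
  ultimately show ?thesis
    unfolding rep_iso_def bij_betw_def using T_add T_scale T_comm by blast
qed

lemma rep_iso_trans:
  assumes "rep_iso sc1 sc2 K \<rho>1 S1 \<rho>2 S2" "rep_iso sc2 sc3 K \<rho>2 S2 \<rho>3 S3"
  shows "rep_iso sc1 sc3 K \<rho>1 S1 \<rho>3 S3"
proof -
  obtain T where T: "bij_betw T S1 S2" "\<forall>x\<in>S1. \<forall>y\<in>S1. T (x + y) = T x + T y"
    "\<forall>c. \<forall>x\<in>S1. T (sc1 c x) = sc2 c (T x)" "\<forall>k\<in>carrier K. \<forall>x\<in>S1. T (\<rho>1 k x) = \<rho>2 k (T x)"
    using assms(1) unfolding rep_iso_def by blast
  obtain T' where T': "bij_betw T' S2 S3" "\<forall>x\<in>S2. \<forall>y\<in>S2. T' (x + y) = T' x + T' y"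
    "\<forall>c. \<forall>x\<in>S2. T' (sc2 c x) = sc3 c (T' x)" "\<forall>k\<in>carrier K. \<forall>x\<in>S2. T' (\<rho>2 k x) = \<rho>3 k (T' x)"
    using assms(2) unfolding rep_iso_def by blast
  have "T x \<in> S2" if "x \<in> S1" for x using T(1) that bij_betwE by blast
  then show ?thesis
    unfolding rep_iso_def using T T'
    by (intro exI[of _ "T' \<circ> T"]) (auto intro: bij_betw_trans)
qed

lemma rep_iso_sym:
  assumes rep: "is_rep sc1 K \<rho>1 S1" and iso: "rep_iso sc1 sc2 K \<rho>1 S1 \<rho>2 S2"
  shows "rep_iso sc2 sc1 K \<rho>2 S2 \<rho>1 S1"
proof -
  obtain T where T: "bij_betw T S1 S2" "\<forall>x\<in>S1. \<forall>y\<in>S1. T (x + y) = T x + T y"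
    "\<forall>c. \<forall>x\<in>S1. T (sc1 c x) = sc2 c (T x)" "\<forall>k\<in>carrier K. \<forall>x\<in>S1. T (\<rho>1 k x) = \<rho>2 k (T x)"
    using iso unfolding rep_iso_def by blast
  let ?T' = "inv_into S1 T"
  note S1 = is_subspaceD[OF is_repD(1)[OF rep]]
  have in1: "?T' y \<in> S1" if "y \<in> S2" for y using bij_betw_inv_into[OF T(1)] that bij_betwE by blast
  have right: "T (?T' y) = y" if "y \<in> S2" for y using T(1) that bij_betw_inv_into_right by fastforce
  have left: "?T' (T x) = x" if "x \<in> S1" for x using T(1) that bij_betw_inv_into_left by fastforce
  have "?T' (x + y) = ?T' x + ?T' y" if "x \<in> S2" "y \<in> S2" for x y
    using left[of "?T' x + ?T' y"] that in1 right S1(2) T(2) by simp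
  moreover have "?T' (sc2 c x) = sc1 c (?T' x)" if "x \<in> S2" for c x
    using left[of "sc1 c (?T' x)"] that in1 right S1(3) T(3) by simp
  moreover have "?T' (\<rho>2 k x) = \<rho>1 k (?T' x)" if "k \<in> carrier K" "x \<in> S2" for k x
    using left[of "\<rho>1 k (?T' x)"] that in1 right is_repD(2)[OF rep] T(4) by simp
  ultimately show ?thesis
    unfolding rep_iso_def using bij_betw_inv_into[OF T(1)] by blast
qed

lemma rep_iso_pullback:
  assumes iso: "rep_iso sc1 sc2 K \<rho>1 S1 \<rho>2 S2"
    and \<beta>: "\<And>k. k \<in> carrier K' \<Longrightarrow> \<beta> k \<in> carrier K"
    and \<rho>1': "\<And>k x. k \<in> carrier K' \<Longrightarrow> x \<in> S1 \<Longrightarrow> \<rho>1' k x = \<rho>1 (\<beta> k) x"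
    and \<rho>2': "\<And>k y. k \<in> carrier K' \<Longrightarrow> y \<in> S2 \<Longrightarrow> \<rho>2' k y = \<rho>2 (\<beta> k) y"
  shows "rep_iso sc1 sc2 K' \<rho>1' S1 \<rho>2' S2"
proof -
  obtain T where T: "bij_betw T S1 S2" "\<forall>x\<in>S1. \<forall>y\<in>S1. T (x + y) = T x + T y"
    "\<forall>c. \<forall>x\<in>S1. T (sc1 c x) = sc2 c (T x)" "\<forall>k\<in>carrier K. \<forall>x\<in>S1. T (\<rho>1 k x) = \<rho>2 k (T x)"
    using iso unfolding rep_iso_def by blast
  have "T x \<in> S2" if "x \<in> S1" for x using T(1) that bij_betwE by blast
  then show ?thesis
    unfolding rep_iso_def using T \<beta> \<rho>1' \<rho>2' by (intro exI[of _ T]) simp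
qed

context group
begin

lemma inv_mult_cancel [simp]: "x \<in> carrier G \<Longrightarrow> y \<in> carrier G \<Longrightarrow> inv x \<otimes> (x \<otimes> y) = y"
  by (simp add: m_assoc[symmetric])

lemma mult_inv_cancel [simp]: "x \<in> carrier G \<Longrightarrow> y \<in> carrier G \<Longrightarrow> x \<otimes> (inv x \<otimes> y) = y"
  by (simp add: m_assoc[symmetric])

lemma normalizer_iff:
  assumes K: "K \<subseteq> carrier G"
  shows "z \<in> normalizer G K \<longleftrightarrow>
    z \<in> carrier G \<and> (\<forall>k\<in>K. z \<otimes> k \<otimes> inv z \<in> K) \<and> (\<forall>k\<in>K. inv z \<otimes> k \<otimes> z \<in> K)"
proof -
  have conj: "z <# K #> inv z = (\<lambda>k. z \<otimes> k \<otimes> inv z) ` K"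
    unfolding l_coset_def r_coset_def by auto
  have norm: "z \<in> normalizer G K \<longleftrightarrow> z \<in> carrier G \<and> (\<lambda>k. z \<otimes> k \<otimes> inv z) ` K = K"
    unfolding normalizer_def stabilizer_def using K by (simp add: conj)
  show ?thesis
  proof (cases "z \<in> carrier G")
    case z: True
    have conj_inv: "z \<otimes> (inv z \<otimes> k \<otimes> z) \<otimes> inv z = k"
      and inv_conj: "inv z \<otimes> (z \<otimes> k \<otimes> inv z) \<otimes> z = k" if "k \<in> K" for k
      using that K z by (auto simp: m_assoc)
    have "(\<lambda>k. z \<otimes> k \<otimes> inv z) ` K = K \<longleftrightarrow>
      (\<forall>k\<in>K. z \<otimes> k \<otimes> inv z \<in> K) \<and> (\<forall>k\<in>K. inv z \<otimes> k \<otimes> z \<in> K)"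
    proof
      assume e: "(\<lambda>k. z \<otimes> k \<otimes> inv z) ` K = K"
      have "inv z \<otimes> k \<otimes> z \<in> K" if k: "k \<in> K" for k
      proof -
        obtain k' where "k' \<in> K" "k = z \<otimes> k' \<otimes> inv z" using e k by blast
        then show ?thesis using inv_conj by simp
      qed
      then show "(\<forall>k\<in>K. z \<otimes> k \<otimes> inv z \<in> K) \<and> (\<forall>k\<in>K. inv z \<otimes> k \<otimes> z \<in> K)"
        using e by blast
    next
      assume c: "(\<forall>k\<in>K. z \<otimes> k \<otimes> inv z \<in> K) \<and> (\<forall>k\<in>K. inv z \<otimes> k \<otimes> z \<in> K)"
      have "k \<in> (\<lambda>k. z \<otimes> k \<otimes> inv z) ` K" if "k \<in> K" for k
        using c conj_inv[OF that] that by (metis image_eqI)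
      then show "(\<lambda>k. z \<otimes> k \<otimes> inv z) ` K = K" using c by blast
    qed
    then show ?thesis using norm z by blast
  qed (simp add: norm)
qed

lemma subgroup_mult_right_iff:
  assumes L: "subgroup L G" and n: "n \<in> L" and x: "x \<in> carrier G"
  shows "x \<otimes> n \<in> L \<longleftrightarrow> x \<in> L"
proof
  assume "x \<otimes> n \<in> L"
  then have "x \<otimes> n \<otimes> inv n \<in> L" by (rule subgroup.m_closed[OF L _ subgroup.m_inv_closed[OF L n]])
  moreover have "x \<otimes> n \<otimes> inv n = x" using x subgroup.mem_carrier[OF L n] by (simp add: m_assoc)
  ultimately show "x \<in> L" by simp
next
  assume "x \<in> L"
  then show "x \<otimes> n \<in> L" by (rule subgroup.m_closed[OF L _ n])
qed

lemma subgroup_mult_left_iff: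
  assumes L: "subgroup L G" and n: "n \<in> L" and x: "x \<in> carrier G"
  shows "n \<otimes> x \<in> L \<longleftrightarrow> x \<in> L"
proof
  assume "n \<otimes> x \<in> L"
  then have "inv n \<otimes> (n \<otimes> x) \<in> L" by (rule subgroup.m_closed[OF L subgroup.m_inv_closed[OF L n]])
  then show "x \<in> L" using x subgroup.mem_carrier[OF L n] by simp
next
  assume "x \<in> L"
  then show "n \<otimes> x \<in> L" by (rule subgroup.m_closed[OF L n])
qed

text \<open>For \<open>z \<in> G\<close> the elements \<open>x\<close> with \<open>z x\<inverse> \<in> L\<close> form the right coset \<open>L z\<close>, so there are
  \<open>|L|\<close> of them.\<close>
lemma card_mult_inv_in_subgroup:
  assumes L: "subgroup L G" and z: "z \<in> carrier G"
  shows "card {x \<in> carrier G. z \<otimes> inv x \<in> L} = card L"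
proof -
  have LG: "L \<subseteq> carrier G" using L by (rule subgroup.subset)
  have "{x \<in> carrier G. z \<otimes> inv x \<in> L} = L #> z"
  proof
    show "{x \<in> carrier G. z \<otimes> inv x \<in> L} \<subseteq> L #> z"
    proof
      fix x assume "x \<in> {x \<in> carrier G. z \<otimes> inv x \<in> L}"
      then have x: "x \<in> carrier G" and n: "z \<otimes> inv x \<in> L" by auto
      have "inv (z \<otimes> inv x) \<in> L" using n subgroup.m_inv_closed[OF L] by blast
      moreover have "inv (z \<otimes> inv x) \<otimes> z = x" using x z by (simp add: inv_mult_group m_assoc)
      ultimately show "x \<in> L #> z" unfolding r_coset_def by force
    qed
    show "L #> z \<subseteq> {x \<in> carrier G. z \<otimes> inv x \<in> L}"
    proof
      fix x assume "x \<in> L #> z"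
      then obtain h where h: "h \<in> L" "x = h \<otimes> z" unfolding r_coset_def by blast
      have hG: "h \<in> carrier G" using h(1) LG by blast
      then have "z \<otimes> inv x = inv h" using z h(2) by (simp add: inv_mult_group)
      then show "x \<in> {x \<in> carrier G. z \<otimes> inv x \<in> L}"
        using h hG z subgroup.m_inv_closed[OF L] by simp
    qed
  qed
  then show ?thesis using card_rcosets_equal[OF rcosetsI[OF LG z] LG] by simp
qed

lemma sum_right_translate:
  assumes "subgroup K G" "g \<in> K"
  shows "(\<Sum>h\<in>K. F (h \<otimes> g)) = (\<Sum>h\<in>K. F h)"
proof (rule sum.reindex_bij_betw)
  show "bij_betw (\<lambda>h. h \<otimes> g) K K"
  proof (rule bij_betwI[of _ _ _ "\<lambda>h. h \<otimes> inv g"])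
    show "(\<lambda>h. h \<otimes> g) \<in> K \<rightarrow> K" "(\<lambda>h. h \<otimes> inv g) \<in> K \<rightarrow> K"
      using assms subgroup.m_closed subgroup.m_inv_closed by fastforce+
    show "x \<otimes> g \<otimes> inv g = x" "x \<otimes> inv g \<otimes> g = x" if "x \<in> K" for x
      using that assms subgroup.mem_carrier by (fastforce simp: m_assoc)+
  qed
qed

lemma irred_rep_conj:
  assumes H: "H \<lhd> G" and irr: "irred_rep sc (G\<lparr>carrier := H\<rparr>) \<rho> S" and z: "z \<in> carrier G"
  shows "irred_rep sc (G\<lparr>carrier := H\<rparr>) (\<lambda>h. \<rho> (z \<otimes> h \<otimes> inv z)) S"
proof -
  let ?c = "\<lambda>h. z \<otimes> h \<otimes> inv z"
  have sub: "subgroup H G" using H by (rule normal_imp_subgroup)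
  have c_in: "?c h \<in> H" if "h \<in> H" for h using normal.inv_op_closed2[OF H z that] .
  have c_one: "?c \<one> = \<one>" using z by simp
  have c_mult: "?c (k \<otimes> l) = ?c k \<otimes> ?c l" if "k \<in> H" "l \<in> H" for k l
    using that z subgroup.mem_carrier[OF sub] by (simp add: m_assoc)
  have c_onto: "h = ?c (inv z \<otimes> h \<otimes> z) \<and> inv z \<otimes> h \<otimes> z \<in> H" if "h \<in> H" for h
    using that z subgroup.mem_carrier[OF sub] normal.inv_op_closed1[OF H] by (simp add: m_assoc)
  note rep = is_repD[OF irred_repD(1)[OF irr]]
  have "is_rep sc (G\<lparr>carrier := H\<rparr>) (\<lambda>h. \<rho> (?c h)) S"
    unfolding is_rep_def using rep c_in c_mult by (simp add: c_one)
  moreover have "T = {0} \<or> T = S"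
    if T: "invariant_subspace sc (G\<lparr>carrier := H\<rparr>) (\<lambda>h. \<rho> (?c h)) S T" for T
  proof -
    have "invariant_subspace sc (G\<lparr>carrier := H\<rparr>) \<rho> S T"
      unfolding invariant_subspace_def
    proof (intro conjI ballI)
      show "T \<subseteq> S" "is_subspace sc T" using T by (auto simp: invariant_subspace_def)
      fix h v assume h: "h \<in> carrier (G\<lparr>carrier := H\<rparr>)" and v: "v \<in> T"
      obtain h' where "h' \<in> H" "h = ?c h'" using c_onto h by auto
      then show "\<rho> h v \<in> T" using T v unfolding invariant_subspace_def by auto
    qed
    then show ?thesis using irred_repD(3)[OF irr] by blast
  qed
  ultimately show ?thesis using irred_repD(2)[OF irr] unfolding irred_rep_def by blast
qed

end

section \<open>Induced representations\<close>

text \<open>We write \<open>f \<cdot> l = ind_act G L l f\<close> for the right translation \<open>x \<mapsto> f (x l)\<close> of functions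
  supported on \<open>L\<close>; \<open>ind_space G K L \<rho> S\<close> is the induced representation \<open>Ind_K^L S\<close>.\<close>

lemma ind_act_apply: "ind_act G L l f x = (if x \<in> L then f (x \<otimes>\<^bsub>G\<^esub> l) else 0)"
  by (simp add: ind_act_def)

lemma ind_act_add: "ind_act G L l (f + g) = ind_act G L l f + ind_act G L l (g :: _ \<Rightarrow> 'v::monoid_add)"
  by (simp add: ind_act_def fun_eq_iff)

lemma ind_act_zero [simp]: "ind_act G L l (0 :: _ \<Rightarrow> 'v::zero) = 0"
  by (simp add: ind_act_def fun_eq_iff)

lemma ind_act_scale:
  "sc c 0 = 0 \<Longrightarrow> ind_act G L l (fscale sc c f) = fscale sc c (ind_act G L l f)"
  by (simp add: ind_act_def fun_eq_iff)

lemma ind_spaceD: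
  assumes "f \<in> ind_space G K L \<rho> S"
  shows "x \<notin> L \<Longrightarrow> f x = 0" "x \<in> L \<Longrightarrow> f x \<in> S"
    "k \<in> K \<Longrightarrow> x \<in> L \<Longrightarrow> f (k \<otimes>\<^bsub>G\<^esub> x) = \<rho> k (f x)"
  using assms unfolding ind_space_def by auto

lemma ind_spaceI:
  assumes "\<And>x. x \<notin> L \<Longrightarrow> f x = 0" "\<And>x. x \<in> L \<Longrightarrow> f x \<in> S"
    "\<And>k x. k \<in> K \<Longrightarrow> x \<in> L \<Longrightarrow> f (k \<otimes>\<^bsub>G\<^esub> x) = \<rho> k (f x)"
  shows "f \<in> ind_space G K L \<rho> S"
  using assms unfolding ind_space_def by auto

context group
begin

lemma ind_act_one:
  "L \<subseteq> carrier G \<Longrightarrow> (\<And>x. x \<notin> L \<Longrightarrow> f x = 0) \<Longrightarrow> ind_act G L \<one> f = f"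
  by (auto simp: ind_act_def fun_eq_iff)

lemma ind_act_mult:
  assumes "subgroup L G" "k \<in> L" "l \<in> carrier G"
  shows "ind_act G L (k \<otimes> l) f = ind_act G L k (ind_act G L l f)"
  using assms subgroup.m_closed[OF assms(1)] subgroup.mem_carrier[OF assms(1)]
  by (auto simp: ind_act_def fun_eq_iff m_assoc)

lemma ind_act_supported:
  assumes L: "subgroup L G" and n: "n \<in> L" and f: "\<And>y. y \<notin> L \<Longrightarrow> f y = 0" and x: "x \<notin> L"
  shows "ind_act G (carrier G) n f x = 0"
proof (cases "x \<in> carrier G")
  case True
  then have "x \<otimes> n \<notin> L" using x subgroup_mult_right_iff[OF L n] by blast
  then show ?thesis using f True by (simp add: ind_act_apply)
qed (simp add: ind_act_apply)

lemma ind_space_rep: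
  assumes L: "subgroup L G" and sc0: "\<And>c. sc c 0 = 0" and rep: "is_rep sc (G\<lparr>carrier := L\<rparr>) \<rho> S"
  shows "is_rep (fscale sc) G (ind_act G (carrier G)) (ind_space G L (carrier G) \<rho> S)"
proof -
  let ?W = "ind_space G L (carrier G) \<rho> S"
  note \<rho> = is_repD[OF rep, simplified]
  note S = is_subspaceD[OF \<rho>(1)]
  have "0 \<in> ?W" using S(1) is_rep_zero[OF rep] by (intro ind_spaceI) simp_all
  moreover have "f + g \<in> ?W" if "f \<in> ?W" "g \<in> ?W" for f g
    using ind_spaceD[OF that(1)] ind_spaceD[OF that(2)] S(2) \<rho>(3) by (intro ind_spaceI) simp_all
  moreover have "fscale sc c f \<in> ?W" if "f \<in> ?W" for c f
    using ind_spaceD[OF that] S(3) \<rho>(4) sc0 by (intro ind_spaceI) simp_all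
  moreover have "ind_act G (carrier G) g f \<in> ?W" if "g \<in> carrier G" "f \<in> ?W" for g f
    using ind_spaceD[OF that(2)] that(1) subgroup.mem_carrier[OF L]
    by (intro ind_spaceI) (simp_all add: ind_act_apply m_assoc)
  moreover have "ind_act G (carrier G) \<one> f = f" if "f \<in> ?W" for f
    using ind_act_one ind_spaceD(1)[OF that] by blast
  ultimately show ?thesis
    unfolding is_rep_def is_subspace_def
    by (simp add: ind_act_add ind_act_scale sc0 ind_act_mult[OF subgroup_self])
qed

text \<open>A nonzero \<open>u \<in> S\<close> gives the nonzero element \<open>x \<mapsto> \<rho> x u\<close> (on \<open>L\<close>) of \<open>Ind_L^G S\<close>.\<close>
lemma ind_space_nonzero:
  assumes L: "subgroup L G" and rep: "is_rep sc (G\<lparr>carrier := L\<rparr>) \<rho> S" and ne: "S \<noteq> {0}"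
  shows "ind_space G L (carrier G) \<rho> S \<noteq> {0}"
proof -
  note \<rho> = is_repD[OF rep, simplified]
  obtain u where u: "u \<in> S" "u \<noteq> 0" using ne is_subspaceD(1)[OF \<rho>(1)] by blast
  define f where "f x = (if x \<in> L then \<rho> x u else 0)" for x
  have "f \<in> ind_space G L (carrier G) \<rho> S"
  proof (rule ind_spaceI)
    show "f x = 0" if "x \<notin> carrier G" for x
      using that subgroup.mem_carrier[OF L] by (auto simp: f_def)
    show "f x \<in> S" for x using u \<rho>(2) is_subspaceD(1)[OF \<rho>(1)] by (simp add: f_def)
    show "f (k \<otimes> x) = \<rho> k (f x)" if "k \<in> L" "x \<in> carrier G" for k x
    proof (cases "x \<in> L")
      case True then show ?thesis using that u \<rho>(6) subgroup.m_closed[OF L] by (simp add: f_def)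
    next
      case False
      then have "k \<otimes> x \<notin> L" using that subgroup_mult_left_iff[OF L] by blast
      then show ?thesis using False that is_rep_zero[OF rep] by (simp add: f_def)
    qed
  qed
  moreover have "f \<one> = u" using u \<rho>(5) subgroup.one_closed[OF L] by (simp add: f_def)
  ultimately show ?thesis using u(2) by (metis singletonD zero_fun_apply)
qed

text \<open>Every element \<open>f\<close> of \<open>Ind_L^G S\<close> is recovered, up to the factor \<open>|L|\<close>, from any family
  \<open>g x\<close> of elements supported on \<open>L\<close> with \<open>g x \<one> = f x\<close>, as the sum of the translates
  \<open>g x \<cdot> x\<inverse>\<close>: only the \<open>|L|\<close> elements \<open>x \<in> L z\<close> contribute to the value at \<open>z\<close>.\<close>
lemma ind_reconstruct:
  assumes fin: "finite (carrier G)" and vs: "vector_space sc" and L: "subgroup L G"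
    and f: "f \<in> ind_space G L (carrier G) \<rho> S"
    and gW: "\<And>x. x \<in> carrier G \<Longrightarrow> g x \<in> ind_space G L (carrier G) \<rho> S"
    and g_supp: "\<And>x y. x \<in> carrier G \<Longrightarrow> y \<notin> L \<Longrightarrow> g x y = 0"
    and g_one: "\<And>x. x \<in> carrier G \<Longrightarrow> g x \<one> = f x"
  shows "(\<Sum>x\<in>carrier G. ind_act G (carrier G) (inv x) (g x)) = fscale sc (of_nat (card L)) f"
proof -
  interpret vs: vector_space sc by (rule vs)
  let ?F = "\<lambda>x. ind_act G (carrier G) (inv x) (g x)"
  have F_val: "?F x z = (if z \<otimes> inv x \<in> L then f z else 0)"
    if x: "x \<in> carrier G" and z: "z \<in> carrier G" for x z
  proof (cases "z \<otimes> inv x \<in> L")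
    case True
    have "?F x z = g x ((z \<otimes> inv x) \<otimes> \<one>)" using x z by (simp add: ind_act_apply)
    also have "\<dots> = \<rho> (z \<otimes> inv x) (f x)" using ind_spaceD(3)[OF gW[OF x] True] g_one[OF x] by simp
    also have "\<dots> = f ((z \<otimes> inv x) \<otimes> x)" using ind_spaceD(3)[OF f True x] by simp
    also have "(z \<otimes> inv x) \<otimes> x = z" using x z by (simp add: m_assoc)
    finally show ?thesis using True by simp
  next
    case False
    then show ?thesis using x z g_supp[OF x] by (simp add: ind_act_apply)
  qed
  have "(\<Sum>x\<in>carrier G. ?F x) z = sc (of_nat (card L)) (f z)" for z
  proof (cases "z \<in> carrier G")
    case True
    have "(\<Sum>x\<in>carrier G. ?F x) z = (\<Sum>x\<in>carrier G. if z \<otimes> inv x \<in> L then f z else 0)"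
      unfolding sum_fun_apply using F_val True by (intro sum.cong) auto
    also have "\<dots> = (\<Sum>x\<in>{x \<in> carrier G. z \<otimes> inv x \<in> L}. f z)"
      by (rule sum.inter_filter[OF fin, symmetric])
    also have "\<dots> = sc (of_nat (card L)) (f z)"
      by (simp only: vs.sum_constant_scale card_mult_inv_in_subgroup[OF L True])
    finally show ?thesis .
  next
    case False
    then show ?thesis using ind_spaceD(1)[OF f False] unfolding sum_fun_apply
      by (simp add: ind_act_apply)
  qed
  then show ?thesis by (simp add: fun_eq_iff)
qed

end

definition local_part :: "('g, 'm) monoid_scheme \<Rightarrow> 'g set \<Rightarrow> ('g \<Rightarrow> 'v::zero) set \<Rightarrow> 'v set" where
  "local_part G L T = {f \<one>\<^bsub>G\<^esub> | f. f \<in> T \<and> (\<forall>x. x \<notin> L \<longrightarrow> f x = 0)}"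

lemma local_partI: "f \<in> T \<Longrightarrow> (\<And>x. x \<notin> L \<Longrightarrow> f x = 0) \<Longrightarrow> f \<one>\<^bsub>G\<^esub> \<in> local_part G L T"
  unfolding local_part_def by auto

lemma local_partE:
  assumes "a \<in> local_part G L T"
  obtains f where "f \<in> T" "\<And>x. x \<notin> L \<Longrightarrow> f x = 0" "a = f \<one>\<^bsub>G\<^esub>"
  using assms unfolding local_part_def by auto

context group
begin

lemma local_part_invariant:
  assumes L: "subgroup L G" and sc0: "\<And>c. sc c 0 = 0"
    and T: "invariant_subspace (fscale sc) G (ind_act G (carrier G)) (ind_space G L (carrier G) \<rho> S) T"
  shows "invariant_subspace sc (G\<lparr>carrier := L\<rparr>) \<rho> S (local_part G L T)"
proof -
  have TW: "T \<subseteq> ind_space G L (carrier G) \<rho> S"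
    and Tsub: "is_subspace (fscale sc) T"
    and Tact: "\<And>g f. g \<in> carrier G \<Longrightarrow> f \<in> T \<Longrightarrow> ind_act G (carrier G) g f \<in> T"
    using T unfolding invariant_subspace_def by simp_all
  note T' = is_subspaceD[OF Tsub]
  have one: "\<one> \<in> carrier G" by simp
  have in_S: "a \<in> S" if a: "a \<in> local_part G L T" for a
  proof -
    obtain f where f: "f \<in> T" "\<And>x. x \<notin> L \<Longrightarrow> f x = 0" "a = f \<one>" using a by (rule local_partE) blast
    show "a \<in> S" using ind_spaceD(2)[OF subsetD[OF TW f(1)] one] f(3) by simp
  qed
  have zero: "0 \<in> local_part G L T"
    using local_partI[OF T'(1), of L] by simp
  have add: "a + b \<in> local_part G L T" if a: "a \<in> local_part G L T" and b: "b \<in> local_part G L T" for a b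
  proof -
    obtain f g where "f \<in> T" "\<And>x. x \<notin> L \<Longrightarrow> f x = 0" "a = f \<one>"
      and "g \<in> T" "\<And>x. x \<notin> L \<Longrightarrow> g x = 0" "b = g \<one>"
      using local_partE[OF a] local_partE[OF b] by metis
    then show ?thesis using local_partI[of "f + g" T L G] T'(2) by simp
  qed
  have scale: "sc c a \<in> local_part G L T" if a: "a \<in> local_part G L T" for c a
  proof -
    obtain f where "f \<in> T" "\<And>x. x \<notin> L \<Longrightarrow> f x = 0" "a = f \<one>"
      using a by (rule local_partE) blast
    then show ?thesis using local_partI[of "fscale sc c f" T L G] T'(3) sc0 by simp
  qed
  have act: "\<rho> n a \<in> local_part G L T" if n: "n \<in> L" and a: "a \<in> local_part G L T" for n a
  proof -
    obtain f where f: "f \<in> T" "\<And>x. x \<notin> L \<Longrightarrow> f x = 0" "a = f \<one>"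
      using a by (rule local_partE) blast
    have nG: "n \<in> carrier G" using n subgroup.mem_carrier[OF L] by blast
    have "\<rho> n a = ind_act G (carrier G) n f \<one>"
      using ind_spaceD(3)[OF subsetD[OF TW f(1)] n one] f(3) nG by (simp add: ind_act_apply)
    then show ?thesis
      using local_partI[where G = G, OF Tact[OF nG f(1)] ind_act_supported[OF L n f(2)]] by simp
  qed
  show ?thesis
    unfolding invariant_subspace_def is_subspace_def
  proof (intro conjI ballI allI subsetI)
    fix k v assume "k \<in> carrier (G\<lparr>carrier := L\<rparr>)" "v \<in> local_part G L T"
    then show "\<rho> k v \<in> local_part G L T" using act by simp
  qed (fact in_S zero add scale)+
qed

lemma local_part_full:
  fixes sc :: "'e::field_char_0 \<Rightarrow> 'v::ab_group_add \<Rightarrow> 'v"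
  assumes fin: "finite (carrier G)" and vs: "vector_space sc" and L: "subgroup L G"
    and T: "invariant_subspace (fscale sc) G (ind_act G (carrier G)) (ind_space G L (carrier G) \<rho> S) T"
    and full: "S \<subseteq> local_part G L T"
  shows "T = ind_space G L (carrier G) \<rho> S"
proof -
  interpret vs: vector_space sc by (rule vs)
  let ?W = "ind_space G L (carrier G) \<rho> S"
  have TW: "T \<subseteq> ?W" and Tsub: "is_subspace (fscale sc) T"
    and Tact: "\<And>g f. g \<in> carrier G \<Longrightarrow> f \<in> T \<Longrightarrow> ind_act G (carrier G) g f \<in> T"
    using T unfolding invariant_subspace_def by simp_all
  have card: "(of_nat (card L) :: 'e) \<noteq> 0"
    using finite_subset[OF subgroup.subset[OF L] fin] subgroup.one_closed[OF L] by (auto simp: card_eq_0_iff)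
  have "f \<in> T" if f: "f \<in> ?W" for f
  proof -
    have "\<exists>g. g \<in> T \<and> (\<forall>y. y \<notin> L \<longrightarrow> g y = 0) \<and> g \<one> = f x" if x: "x \<in> carrier G" for x
    proof -
      have "f x \<in> local_part G L T" using full ind_spaceD(2)[OF f x] by blast
      then obtain g where "g \<in> T" "\<And>y. y \<notin> L \<Longrightarrow> g y = 0" "f x = g \<one>"
        by (rule local_partE) blast
      then show ?thesis by metis
    qed
    then obtain g where g: "\<And>x. x \<in> carrier G \<Longrightarrow> g x \<in> T \<and> (\<forall>y. y \<notin> L \<longrightarrow> g x y = 0) \<and> g x \<one> = f x"
      by metis
    have "(\<Sum>x\<in>carrier G. ind_act G (carrier G) (inv x) (g x)) = fscale sc (of_nat (card L)) f"
      using g TW by (intro ind_reconstruct[OF fin vs L f]) auto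
    moreover have "(\<Sum>x\<in>carrier G. ind_act G (carrier G) (inv x) (g x)) \<in> T"
      by (rule is_subspace_sum[OF Tsub]) (simp add: Tact g)
    ultimately have "fscale sc (1 / of_nat (card L)) (fscale sc (of_nat (card L)) f) \<in> T"
      using is_subspaceD(3)[OF Tsub] by metis
    then show "f \<in> T" using card by (simp add: fscale_def)
  qed
  then show ?thesis using TW by blast
qed

lemma ind_irred_criterion:
  fixes sc :: "'e::field_char_0 \<Rightarrow> 'v::ab_group_add \<Rightarrow> 'v"
  assumes fin: "finite (carrier G)" and vs: "vector_space sc" and L: "subgroup L G"
    and irr: "irred_rep sc (G\<lparr>carrier := L\<rparr>) \<rho> S"
    and local: "\<And>T. invariant_subspace (fscale sc) G (ind_act G (carrier G))
                      (ind_space G L (carrier G) \<rho> S) T \<Longrightarrow> T \<noteq> {0} \<Longrightarrow> local_part G L T \<noteq> {0}"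
  shows "irred_rep (fscale sc) G (ind_act G (carrier G)) (ind_space G L (carrier G) \<rho> S)"
proof -
  interpret vs: vector_space sc by (rule vs)
  have sc0: "sc c 0 = 0" for c by simp
  note rep = irred_repD(1)[OF irr]
  have "T = ind_space G L (carrier G) \<rho> S"
    if T: "invariant_subspace (fscale sc) G (ind_act G (carrier G)) (ind_space G L (carrier G) \<rho> S) T"
      and ne: "T \<noteq> {0}" for T
  proof (rule local_part_full[OF fin vs L T])
    have "local_part G L T = S"
      using irred_repD(3)[OF irr local_part_invariant[OF L sc0 T]] local[OF T ne] by blast
    then show "S \<subseteq> local_part G L T" by simp
  qed
  then show ?thesis
    unfolding irred_rep_def
    using ind_space_rep[OF L sc0 rep] ind_space_nonzero[OF L rep irred_repD(2)[OF irr]] by blast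
qed

text \<open>Elements of \<open>Ind_L^G U\<close> for \<open>U \<subseteq> Ind_K^L S\<close> are functions of two variables; they are
  determined by their values at \<open>(z, \<one>)\<close>, and \<open>z \<mapsto> f z \<one>\<close> lies in \<open>Ind_K^G S\<close>.\<close>
lemma ind_eval_shift:
  assumes L: "subgroup L G" and f: "f \<in> ind_space G L (carrier G) (ind_act G L) U"
    and x: "x \<in> carrier G" and y: "y \<in> L"
  shows "f x y = f (y \<otimes> x) \<one>"
  using ind_spaceD(3)[OF f y x] y subgroup.one_closed[OF L] subgroup.mem_carrier[OF L]
  by (simp add: ind_act_apply)

lemma ind_ind_eval:
  assumes L: "subgroup L G" and KL: "K \<subseteq> L" and U: "U \<subseteq> ind_space G K L \<rho> S"
    and f: "f \<in> ind_space G L (carrier G) (ind_act G L) U"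
  shows "(\<lambda>z. f z \<one>) \<in> ind_space G K (carrier G) \<rho> S"
proof (rule ind_spaceI)
  have one: "\<one> \<in> L" using subgroup.one_closed[OF L] .
  show "f z \<one> = 0" if "z \<notin> carrier G" for z using ind_spaceD(1)[OF f that] by simp
  show "f z \<one> \<in> S" if "z \<in> carrier G" for z
    using ind_spaceD(2)[OF subsetD[OF U ind_spaceD(2)[OF f that]] one] .
  show "f (k \<otimes> z) \<one> = \<rho> k (f z \<one>)" if k: "k \<in> K" and z: "z \<in> carrier G" for k z
  proof -
    have "f (k \<otimes> z) \<one> = f z (k \<otimes> \<one>)"
      using ind_eval_shift[OF L f z] k KL subgroup.mem_carrier[OF L] by auto
    also have "\<dots> = \<rho> k (f z \<one>)" using ind_spaceD(3)[OF subsetD[OF U ind_spaceD(2)[OF f z]] k one] .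
    finally show ?thesis .
  qed
qed

lemma ind_supported_of_eval:
  assumes L: "subgroup L G" and f: "f \<in> ind_space G L (carrier G) (ind_act G L) U"
    and U: "U \<subseteq> ind_space G K L \<rho> S"
    and ev: "\<And>z. z \<notin> L \<Longrightarrow> f z \<one> = 0" and x: "x \<notin> L"
  shows "f x = 0"
proof (cases "x \<in> carrier G")
  case xG: True
  have "f x y = 0" for y
  proof (cases "y \<in> L")
    case True
    then have "y \<otimes> x \<notin> L" using subgroup_mult_left_iff[OF L True xG] x by simp
    then show ?thesis using ind_eval_shift[OF L f xG True] ev by simp
  qed (use ind_spaceD(1)[OF subsetD[OF U ind_spaceD(2)[OF f xG]]] in simp)
  then show ?thesis by (simp add: fun_eq_iff)
qed (rule ind_spaceD(1)[OF f])

lemma ind_shift_nonzero: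
  assumes L: "subgroup L G" and U: "U \<subseteq> ind_space G K L \<rho> S"
    and T: "invariant_subspace sc G (ind_act G (carrier G)) (ind_space G L (carrier G) (ind_act G L) U) T"
    and f: "f \<in> T" "f \<noteq> 0"
  obtains f1 where "f1 \<in> T" "f1 \<one> \<one> \<noteq> 0"
proof -
  have fW: "f \<in> ind_space G L (carrier G) (ind_act G L) U"
    and Tact: "\<And>g f. g \<in> carrier G \<Longrightarrow> f \<in> T \<Longrightarrow> ind_act G (carrier G) g f \<in> T"
    using T f(1) unfolding invariant_subspace_def by auto
  obtain x where "f x \<noteq> 0" using f(2) by (rule fun_nonzeroE)
  then obtain y where fxy: "f x y \<noteq> 0" by (rule fun_nonzeroE)
  have x: "x \<in> carrier G" using fxy ind_spaceD(1)[OF fW] by (cases "x \<in> carrier G") auto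
  have y: "y \<in> L"
    using fxy ind_spaceD(1)[OF subsetD[OF U ind_spaceD(2)[OF fW x]]] by (cases "y \<in> L") auto
  have yx: "y \<otimes> x \<in> carrier G" using x y subgroup.mem_carrier[OF L] by blast
  have "ind_act G (carrier G) (y \<otimes> x) f \<one> \<one> = f x y"
    using ind_eval_shift[OF L fW x y] yx by (simp add: ind_act_apply)
  then show ?thesis using that[OF Tact[OF yx f(1)]] fxy by simp
qed

end

subsection \<open>Restriction and Frobenius reciprocity\<close>

definition restr :: "'g set \<Rightarrow> ('g \<Rightarrow> 'v::zero) \<Rightarrow> 'g \<Rightarrow> 'v" where
  "restr L f = (\<lambda>y. if y \<in> L then f y else 0)"

definition frobenius_map :: "('g, 'm) monoid_scheme \<Rightarrow> 'g set \<Rightarrow> ('g \<Rightarrow> 'v::zero) \<Rightarrow> 'g \<Rightarrow> 'g \<Rightarrow> 'v" where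
  "frobenius_map G L a = (\<lambda>x. if x \<in> carrier G then restr L (ind_act G (carrier G) x a) else 0)"

lemma restr_add: "restr L (f + g) = restr L f + restr L (g :: _ \<Rightarrow> 'v::monoid_add)"
  by (simp add: restr_def fun_eq_iff)

lemma restr_scale: "sc c 0 = 0 \<Longrightarrow> restr L (fscale sc c f) = fscale sc c (restr L f)"
  by (simp add: restr_def fun_eq_iff)

lemma restr_zero [simp]: "restr L 0 = 0"
  by (simp add: restr_def fun_eq_iff)

context group
begin

lemma restr_ind_act:
  assumes "subgroup L G" "n \<in> L"
  shows "restr L (ind_act G (carrier G) n f) = ind_act G L n (restr L f)"
  using assms subgroup.m_closed[OF assms(1)] subgroup.mem_carrier[OF assms(1)]
  by (auto simp: restr_def ind_act_def fun_eq_iff)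

lemma restr_rep:
  fixes V :: "('a \<Rightarrow> 'v::ab_group_add) set"
  assumes L: "subgroup L G" and sc0: "\<And>c. sc c 0 = 0"
    and rep: "is_rep (fscale sc) G (ind_act G (carrier G)) V"
  shows "is_rep (fscale sc) (G\<lparr>carrier := L\<rparr>) (ind_act G L) (restr L ` V)"
proof -
  note V = is_repD[OF rep] and V' = is_subspaceD[OF is_repD(1)[OF rep]]
  have LG: "L \<subseteq> carrier G" using L by (rule subgroup.subset)
  have "is_subspace (fscale sc) (restr L ` V)"
    unfolding is_subspace_def
  proof (intro conjI ballI allI)
    show "0 \<in> restr L ` V" using V'(1) restr_zero by (metis image_eqI)
    fix a b assume "a \<in> restr L ` V" "b \<in> restr L ` V"
    then obtain f g where "f \<in> V" "g \<in> V" "a = restr L f" "b = restr L g" by blast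
    then show "a + b \<in> restr L ` V" using V'(2) restr_add by (metis image_eqI)
  next
    fix c a assume "a \<in> restr L ` V"
    then obtain f where "f \<in> V" "a = restr L f" by blast
    then show "fscale sc c a \<in> restr L ` V" using V'(3) restr_scale[where sc=sc, OF sc0] by (metis image_eqI)
  qed
  moreover have "ind_act G L n a \<in> restr L ` V" if n: "n \<in> L" and a: "a \<in> restr L ` V" for n a
  proof -
    obtain f where "f \<in> V" "a = restr L f" using a by blast
    then show ?thesis using V(2) n LG restr_ind_act[OF L n] by (metis image_eqI subsetD)
  qed
  moreover have "ind_act G L \<one> a = a" if "a \<in> restr L ` V" for a
    using that LG by (auto intro!: ind_act_one simp: restr_def)
  moreover have "ind_act G L (k \<otimes> l) a = ind_act G L k (ind_act G L l a)"
    if "k \<in> L" "l \<in> L" for k l and a :: "'a \<Rightarrow> 'v"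
    using ind_act_mult[OF L] that LG by blast
  ultimately show ?thesis
    unfolding is_rep_def by (simp add: ind_act_add ind_act_scale sc0)
qed

lemma restr_image_nonzero:
  assumes L: "subgroup L G" and rep: "is_rep sc G (ind_act G (carrier G)) V" and ne: "V \<noteq> {0}"
    and V: "V \<subseteq> ind_space G K (carrier G) \<rho> S"
  shows "restr L ` V \<noteq> {0}"
proof -
  obtain a where a: "a \<in> V" "a \<noteq> 0" using ne is_subspaceD(1)[OF is_repD(1)[OF rep]] by blast
  obtain x where x: "a x \<noteq> 0" using a(2) by (rule fun_nonzeroE)
  have xG: "x \<in> carrier G"
    using x ind_spaceD(1)[OF subsetD[OF V a(1)]] by (cases "x \<in> carrier G") auto
  have "restr L (ind_act G (carrier G) x a) \<one> = a x"
    using xG subgroup.one_closed[OF L] by (simp add: restr_def ind_act_apply)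
  then have "restr L (ind_act G (carrier G) x a) \<noteq> 0" using x by (metis zero_fun_apply)
  moreover have "restr L (ind_act G (carrier G) x a) \<in> restr L ` V" using is_repD(2)[OF rep xG a(1)] by blast
  ultimately show ?thesis by blast
qed

lemma restr_shift_nonzero:
  assumes L: "subgroup L G" and rep: "is_rep sc G (ind_act G (carrier G)) V"
    and T: "invariant_subspace sc (G\<lparr>carrier := L\<rparr>) (ind_act G L) (restr L ` V) T"
    and u: "u \<in> T" "u \<noteq> 0"
  obtains a where "a \<in> V" "restr L a \<in> T" "a \<one> \<noteq> 0"
proof -
  have TU: "T \<subseteq> restr L ` V" and Tact: "\<And>n u. n \<in> L \<Longrightarrow> u \<in> T \<Longrightarrow> ind_act G L n u \<in> T"
    using T unfolding invariant_subspace_def by auto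
  obtain a where a: "a \<in> V" "u = restr L a" using u(1) TU by blast
  obtain y where y: "u y \<noteq> 0" using u(2) by (rule fun_nonzeroE)
  then have yL: "y \<in> L" using a(2) by (auto simp: restr_def split: if_splits)
  have yG: "y \<in> carrier G" using yL subgroup.mem_carrier[OF L] by blast
  have "restr L (ind_act G (carrier G) y a) \<in> T"
    unfolding restr_ind_act[OF L yL] using Tact[OF yL u(1)] a(2) by simp
  moreover have "ind_act G (carrier G) y a \<one> = u y" using yL yG a(2) by (simp add: restr_def ind_act_apply)
  ultimately show ?thesis using that is_repD(2)[OF rep yG a(1)] y by simp
qed

lemma restr_preimage_invariant:
  assumes sc0: "\<And>c. sc c 0 = 0" and rep: "is_rep (fscale sc) G (ind_act G (carrier G)) V"
    and T: "invariant_subspace (fscale sc) (G\<lparr>carrier := L\<rparr>) (ind_act G L) (restr L ` V) T"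
  shows "invariant_subspace (fscale sc) G (ind_act G (carrier G)) V
           {b \<in> V. \<forall>x\<in>carrier G. restr L (ind_act G (carrier G) x b) \<in> T}"
  unfolding invariant_subspace_def is_subspace_def
proof (intro conjI ballI allI)
  note V = is_repD[OF rep] and V' = is_subspaceD[OF is_repD(1)[OF rep]]
  have Tsub: "is_subspace (fscale sc) T" using T unfolding invariant_subspace_def by simp
  note T' = is_subspaceD[OF Tsub]
  let ?V2 = "{b \<in> V. \<forall>x\<in>carrier G. restr L (ind_act G (carrier G) x b) \<in> T}"
  show "?V2 \<subseteq> V" by blast
  show "0 \<in> ?V2" using V'(1) T'(1) by simp
  show "b + b' \<in> ?V2" if "b \<in> ?V2" "b' \<in> ?V2" for b b'
    using that V'(2) T'(2) by (simp add: ind_act_add restr_add)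
  show "fscale sc c b \<in> ?V2" if "b \<in> ?V2" for c b
    using that V'(3) T'(3) by (simp add: ind_act_scale restr_scale sc0)
  show "ind_act G (carrier G) g b \<in> ?V2" if g: "g \<in> carrier G" and b: "b \<in> ?V2" for g b
    using b g V(2) by (simp add: ind_act_mult[OF subgroup_self, symmetric])
qed

text \<open>A nonzero element of an irreducible \<open>V\<close> that is supported on \<open>L\<close> and whose restriction
  lies in an \<open>L\<close>-invariant subspace \<open>T\<close> of \<open>Res_L V\<close> forces \<open>T\<close> to be everything, since it
  lies in the invariant subspace above.\<close>
lemma restr_generates:
  assumes L: "subgroup L G" and sc0: "\<And>c. sc c 0 = 0"
    and irr: "irred_rep (fscale sc) G (ind_act G (carrier G)) V"
    and T: "invariant_subspace (fscale sc) (G\<lparr>carrier := L\<rparr>) (ind_act G L) (restr L ` V) T"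
    and a: "a \<in> V" "a \<noteq> 0" "\<And>x. x \<notin> L \<Longrightarrow> a x = 0" "restr L a \<in> T"
  shows "restr L ` V \<subseteq> T"
proof -
  let ?V2 = "{b \<in> V. \<forall>x\<in>carrier G. restr L (ind_act G (carrier G) x b) \<in> T}"
  have Tact: "\<And>n u. n \<in> L \<Longrightarrow> u \<in> T \<Longrightarrow> ind_act G L n u \<in> T" and T0: "0 \<in> T"
    using T is_subspaceD(1) unfolding invariant_subspace_def by auto
  have LG: "L \<subseteq> carrier G" using L by (rule subgroup.subset)
  have "restr L (ind_act G (carrier G) x a) \<in> T" if x: "x \<in> carrier G" for x
  proof (cases "x \<in> L")
    case True
    then show ?thesis unfolding restr_ind_act[OF L True] by (rule Tact[OF _ a(4)])
  next
    case False
    have "restr L (ind_act G (carrier G) x a) = 0"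
      using False x a(3) subgroup_mult_left_iff[OF L] LG
      by (auto simp: restr_def ind_act_apply fun_eq_iff)
    then show ?thesis using T0 by simp
  qed
  then have "a \<in> ?V2" using a(1) by blast
  then have V2: "?V2 = V"
    using irred_repD(3)[OF irr restr_preimage_invariant[OF sc0 irred_repD(1)[OF irr] T]] a(2) by blast
  show ?thesis
  proof
    fix u assume "u \<in> restr L ` V"
    then obtain b where b: "b \<in> V" "u = restr L b" by blast
    have "restr L (ind_act G (carrier G) \<one> b) = restr L b"
      using LG by (auto simp: restr_def ind_act_apply fun_eq_iff)
    then show "u \<in> T" using b V2 by force
  qed
qed

text \<open>Frobenius reciprocity: for irreducible \<open>V\<close> and irreducible \<open>Ind_L^G (Res_L V)\<close>, the
  Frobenius map is a nonzero intertwiner, hence an isomorphism by Schur's lemma.\<close>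
lemma frobenius_map_iso:
  fixes sc :: "'e::field \<Rightarrow> 'v::ab_group_add \<Rightarrow> 'v"
  assumes L: "subgroup L G" and vs: "vector_space sc"
    and irrV: "irred_rep (fscale sc) G (ind_act G (carrier G)) V"
    and supp: "\<And>a x. a \<in> V \<Longrightarrow> x \<notin> carrier G \<Longrightarrow> a x = 0"
    and irrW: "irred_rep (fscale (fscale sc)) G (ind_act G (carrier G))
                 (ind_space G L (carrier G) (ind_act G L) (restr L ` V))"
  shows "rep_iso (fscale sc) (fscale (fscale sc)) G (ind_act G (carrier G)) V
           (ind_act G (carrier G)) (ind_space G L (carrier G) (ind_act G L) (restr L ` V))"
proof -
  interpret vs: vector_space sc by (rule vs)
  have sc0: "sc c 0 = 0" for c by simp
  note V = is_repD[OF irred_repD(1)[OF irrV]]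
  have one: "\<one> \<in> L" using subgroup.one_closed[OF L] .
  let ?F = "frobenius_map G L"
  obtain a where a: "a \<in> V" "a \<noteq> 0"
    using irred_repD(2)[OF irrV] is_subspaceD(1)[OF V(1)] by blast
  then obtain x where x: "a x \<noteq> 0" by (metis ext zero_fun_apply)
  then have xG: "x \<in> carrier G" using supp a(1) by blast
  show ?thesis
  proof (rule schur_iso[OF vector_space_fscale[OF vs] vector_space_fscale[OF vector_space_fscale[OF vs]]
        irrV irrW])
    show "?F b \<in> ind_space G L (carrier G) (ind_act G L) (restr L ` V)" if b: "b \<in> V" for b
    proof (rule ind_spaceI)
      show "?F b y = 0" if "y \<notin> carrier G" for y using that by (simp add: frobenius_map_def)
      show "?F b y \<in> restr L ` V" if "y \<in> carrier G" for y
        using that V(2)[OF that b] by (simp add: frobenius_map_def)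
      show "?F b (n \<otimes> y) = ind_act G L n (?F b y)" if "n \<in> L" "y \<in> carrier G" for n y
        using that subgroup.mem_carrier[OF L] restr_ind_act[OF L]
        by (simp add: frobenius_map_def ind_act_mult[OF subgroup_self])
    qed
    show "?F (b + b') = ?F b + ?F b'" for b b' :: "'a \<Rightarrow> 'v"
      by (rule ext) (simp add: frobenius_map_def ind_act_add restr_add)
    show "?F (fscale sc c b) = fscale (fscale sc) c (?F b)" for c and b :: "'a \<Rightarrow> 'v"
      by (rule ext) (simp add: frobenius_map_def ind_act_scale restr_scale sc0 fun_eq_iff)
    show "?F (ind_act G (carrier G) g b) = ind_act G (carrier G) g (?F b)"
      if "g \<in> carrier G" for g and b :: "'a \<Rightarrow> 'v"
      using that by (simp add: frobenius_map_def fun_eq_iff ind_act_apply ind_act_mult[OF subgroup_self])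
    have "?F a x \<one> = a x" using xG one by (simp add: frobenius_map_def restr_def ind_act_apply)
    then show "?F a \<noteq> 0" using x by (metis zero_fun_apply)
  qed (rule a(1))
qed

end

text \<open>Action of the group-algebra element \<open>\<Sum>h\<in>K. c h \<cdot> h\<close> by right translation.\<close>
definition alg_act ::
  "('g, 'm) monoid_scheme \<Rightarrow> 'g set \<Rightarrow> 'g set \<Rightarrow> ('e \<Rightarrow> 'v \<Rightarrow> 'v) \<Rightarrow> ('g \<Rightarrow> 'e)
   \<Rightarrow> ('g \<Rightarrow> 'v::comm_monoid_add) \<Rightarrow> 'g \<Rightarrow> 'v" where
  "alg_act G L K sc c f = (\<Sum>h\<in>K. fscale sc (c h) (ind_act G L h f))"

lemma alg_act_mem:
  assumes "is_subspace (fscale sc) T" "\<And>h f. h \<in> K \<Longrightarrow> f \<in> T \<Longrightarrow> ind_act G L h f \<in> T" "f \<in> T"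
  shows "alg_act G L K sc c f \<in> T"
  unfolding alg_act_def using assms is_subspaceD(3)[OF assms(1)] by (intro is_subspace_sum) auto

lemma alg_act_apply:
  "alg_act G L K sc c f x = (if x \<in> L then \<Sum>h\<in>K. sc (c h) (f (x \<otimes>\<^bsub>G\<^esub> h)) else \<Sum>h\<in>K. sc (c h) 0)"
  by (simp add: alg_act_def sum_fun_apply ind_act_apply)

lemma eval_alg_act: "(\<lambda>z. alg_act G L K (fscale sc) c f z y) = alg_act G L K sc c (\<lambda>z. f z y)"
  by (simp add: alg_act_apply fun_eq_iff sum_fun_apply)

lemma (in group) restr_alg_act:
  assumes L: "subgroup L G" and K: "K \<subseteq> L" and sc0: "\<And>c. sc c 0 = 0"
  shows "restr L (alg_act G (carrier G) K sc c f) = alg_act G L K sc c (restr L f)"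
proof -
  have "restr L (alg_act G (carrier G) K sc c f) y = alg_act G L K sc c (restr L f) y" for y
  proof (cases "y \<in> L")
    case True
    then have "y \<otimes> h \<in> L" if "h \<in> K" for h using that K subgroup.m_closed[OF L] by blast
    then show ?thesis using True subgroup.mem_carrier[OF L] by (simp add: restr_def alg_act_apply)
  next
    case False
    then show ?thesis using sc0 by (simp add: restr_def alg_act_apply)
  qed
  then show ?thesis by blast
qed

locale gamma_cover = group G for G :: "('g, 'm) monoid_scheme" (structure) +
  fixes H :: "'g set" and \<Gamma> :: "('e::field_char_0^2^2) set set" and Xs :: "('e^2^2) set"
    and \<pi> :: "'g \<Rightarrow> ('e^2^2) set"
  assumes \<Gamma>_sub: "subgroup \<Gamma> PGL2"
    and X_irr: "irred_rep mscale (PGL2\<lparr>carrier := \<Gamma>\<rparr>) psi Xs"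
    and X_faithful: "\<forall>a\<in>\<Gamma>. (\<forall>M\<in>Xs. psi a M = M) \<longrightarrow> a = \<one>\<^bsub>PGL2\<^esub>"
    and G_fin: "finite (carrier G)"
    and H_nrm: "H \<lhd> G"
    and \<pi>_hom: "\<pi> \<in> hom (G\<lparr>carrier := H\<rparr>) (PGL2\<lparr>carrier := \<Gamma>\<rparr>)"
    and \<pi>_surj: "\<pi> ` H = \<Gamma>"
begin

definition Xr :: "'g \<Rightarrow> 'e^2^2 \<Rightarrow> 'e^2^2" where "Xr h = psi (\<pi> h)"
definition conj_rep :: "'g \<Rightarrow> 'g \<Rightarrow> 'e^2^2 \<Rightarrow> 'e^2^2" where "conj_rep z h = Xr (z \<otimes> h \<otimes> inv z)"

abbreviation Ker where "Ker \<equiv> kernel (G\<lparr>carrier := H\<rparr>) (PGL2\<lparr>carrier := \<Gamma>\<rparr>) \<pi>"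
abbreviation N where "N \<equiv> Nsub G H \<pi> \<Gamma> Xs"

lemma H_sub: "subgroup H G" using H_nrm by (rule normal_imp_subgroup)

lemma H_carrier: "h \<in> H \<Longrightarrow> h \<in> carrier G" using subgroup.mem_carrier[OF H_sub] .

lemma H_conj: "g \<in> carrier G \<Longrightarrow> h \<in> H \<Longrightarrow> g \<otimes> h \<otimes> inv g \<in> H"
  by (rule normal.inv_op_closed2[OF H_nrm])

lemma H_conj_inv: "g \<in> carrier G \<Longrightarrow> h \<in> H \<Longrightarrow> inv g \<otimes> h \<otimes> g \<in> H"
  by (rule normal.inv_op_closed1[OF H_nrm])

lemma \<pi>_in: "h \<in> H \<Longrightarrow> \<pi> h \<in> \<Gamma>"
  using \<pi>_hom unfolding hom_def by auto

lemma \<pi>_mult: "h \<in> H \<Longrightarrow> k \<in> H \<Longrightarrow> \<pi> (h \<otimes> k) = \<pi> h \<otimes>\<^bsub>PGL2\<^esub> \<pi> k"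
  using \<pi>_hom unfolding hom_def by auto

lemma Xs_subspace: "is_subspace mscale Xs"
  using is_repD(1)[OF irred_repD(1)[OF X_irr]] .

lemma Xr_in: "h \<in> H \<Longrightarrow> v \<in> Xs \<Longrightarrow> Xr h v \<in> Xs"
  using is_repD(2)[OF irred_repD(1)[OF X_irr]] \<pi>_in unfolding Xr_def by simp

lemma Xr_mult: "h \<in> H \<Longrightarrow> k \<in> H \<Longrightarrow> v \<in> Xs \<Longrightarrow> Xr (h \<otimes> k) v = Xr h (Xr k v)"
  using is_repD(6)[OF irred_repD(1)[OF X_irr]] \<pi>_in \<pi>_mult unfolding Xr_def by simp

lemma Xr_add: "Xr h (x + y) = Xr h x + Xr h y" unfolding Xr_def by (rule psi_add)
lemma Xr_scale: "Xr h (mscale c x) = mscale c (Xr h x)" unfolding Xr_def by (rule psi_scale)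
lemma Xr_sum: "Xr h (sum f A) = (\<Sum>x\<in>A. Xr h (f x))" unfolding Xr_def by (rule psi_sum)

text \<open>As \<open>\<pi> \<one>\<close> is idempotent and conjugation is injective, \<open>\<one>\<close> acts as the identity on \<open>X\<close>.\<close>
lemma Xr_one: "v \<in> Xs \<Longrightarrow> Xr \<one> v = v"
proof -
  assume v: "v \<in> Xs"
  have one: "\<one> \<in> H" using subgroup.one_closed[OF H_sub] .
  have "psi (\<pi> \<one>) (Xr \<one> v) = psi (\<pi> \<one>) v" using Xr_mult[OF one one v] unfolding Xr_def by simp
  then show ?thesis
    unfolding Xr_def using psi_inj \<pi>_in[OF one] subgroup.mem_carrier[OF \<Gamma>_sub] by blast
qed

lemma Xr_inv: "h \<in> H \<Longrightarrow> v \<in> Xs \<Longrightarrow> Xr (inv h) (Xr h v) = v"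
  using Xr_mult[of "inv h" h v] subgroup.m_inv_closed[OF H_sub] Xr_one H_carrier by simp

text \<open>\<open>X\<close> is an irreducible representation of \<open>H\<close>, since \<open>\<pi>\<close> is onto \<open>\<Gamma>\<close>.\<close>
lemma X_irr_H: "irred_rep mscale (G\<lparr>carrier := H\<rparr>) Xr Xs"
proof -
  have "is_rep mscale (G\<lparr>carrier := H\<rparr>) Xr Xs"
    unfolding is_rep_def using Xs_subspace Xr_in Xr_add Xr_scale Xr_one Xr_mult by simp
  moreover have "T = {0} \<or> T = Xs" if T: "invariant_subspace mscale (G\<lparr>carrier := H\<rparr>) Xr Xs T" for T
  proof -
    have "invariant_subspace mscale (PGL2\<lparr>carrier := \<Gamma>\<rparr>) psi Xs T"
      using T \<pi>_surj unfolding invariant_subspace_def Xr_def by auto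
    then show ?thesis using irred_repD(3)[OF X_irr] by blast
  qed
  ultimately show ?thesis using irred_repD(2)[OF X_irr] unfolding irred_rep_def by blast
qed

lemma conj_rep_irr: "z \<in> carrier G \<Longrightarrow> irred_rep mscale (G\<lparr>carrier := H\<rparr>) (conj_rep z) Xs"
  unfolding conj_rep_def[abs_def] by (rule irred_rep_conj[OF H_nrm X_irr_H])


subsection \<open>The subgroup \<open>N\<close>\<close>

text \<open>By faithfulness the kernel of \<open>\<pi>\<close> is the kernel of \<open>X\<close>; \<open>\<pi>\<close> is constant on its cosets.\<close>
lemma Ker_iff: "k \<in> H \<Longrightarrow> k \<in> Ker \<longleftrightarrow> (\<forall>v\<in>Xs. Xr k v = v)"
  unfolding kernel_def Xr_def using X_faithful \<pi>_in is_repD(5)[OF irred_repD(1)[OF X_irr]] by auto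

lemma Ker_subset: "Ker \<subseteq> H"
  unfolding kernel_def by auto

lemma Ker_carrier: "Ker \<subseteq> carrier G"
  using Ker_subset H_carrier by blast

lemma \<pi>_eq_imp_Ker:
  assumes "h \<in> H" "h' \<in> H" "\<pi> h = \<pi> h'"
  shows "inv h \<otimes> h' \<in> Ker"
proof -
  have "Xr (inv h \<otimes> h') v = v" if v: "v \<in> Xs" for v
  proof -
    have "Xr (inv h \<otimes> h') v = Xr (inv h) (Xr h' v)"
      using Xr_mult subgroup.m_inv_closed[OF H_sub] assms v by blast
    also have "Xr h' v = Xr h v" unfolding Xr_def using assms(3) by simp
    finally show ?thesis using Xr_inv assms(1) v by simp
  qed
  then show ?thesis
    using Ker_iff assms subgroup.m_closed[OF H_sub] subgroup.m_inv_closed[OF H_sub] by blast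
qed

lemma \<pi>_mult_Ker:
  assumes "h \<in> H" "k \<in> Ker"
  shows "\<pi> (h \<otimes> k) = \<pi> h"
proof -
  have "k \<in> H" "\<pi> k = \<one>\<^bsub>PGL2\<^esub>" using assms(2) unfolding kernel_def by auto
  then have "\<pi> (h \<otimes> k) = \<pi> h \<otimes>\<^bsub>PGL2\<^esub> \<one>\<^bsub>PGL2\<^esub>" using \<pi>_mult assms(1) by simp
  also have "\<dots> = \<pi> h" using PGL2_r_one \<pi>_in[OF assms(1)] subgroup.mem_carrier[OF \<Gamma>_sub] by blast
  finally show ?thesis .
qed

lemma conj_aut_\<pi>:
  assumes z: "z \<in> normalizer G Ker" and h: "h \<in> H"
  shows "conj_aut G H \<pi> z (\<pi> h) = \<pi> (z \<otimes> h \<otimes> inv z)"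
proof -
  have zG: "z \<in> carrier G" and zK: "\<And>k. k \<in> Ker \<Longrightarrow> z \<otimes> k \<otimes> inv z \<in> Ker"
    using z normalizer_iff[OF Ker_carrier] by auto
  define h' where "h' = (SOME h'. h' \<in> H \<and> \<pi> h' = \<pi> h)"
  have "h' \<in> H \<and> \<pi> h' = \<pi> h" unfolding h'_def by (rule someI[of _ h]) (simp add: h)
  then have h': "h' \<in> H" "\<pi> h' = \<pi> h" by auto
  define k where "k = inv h \<otimes> h'"
  have k: "k \<in> Ker" unfolding k_def using \<pi>_eq_imp_Ker h h' by simp
  have "h' = h \<otimes> k" unfolding k_def using h h' H_carrier by simp
  then have "z \<otimes> h' \<otimes> inv z = (z \<otimes> h \<otimes> inv z) \<otimes> (z \<otimes> k \<otimes> inv z)"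
    using zG h k H_carrier Ker_subset by (auto simp: m_assoc)
  then have "\<pi> (z \<otimes> h' \<otimes> inv z) = \<pi> (z \<otimes> h \<otimes> inv z)"
    using \<pi>_mult_Ker H_conj[OF zG h] zK[OF k] by simp
  then show ?thesis unfolding conj_aut_def h'_def[symmetric] by simp
qed

lemma conj_aut_hom:
  assumes z: "z \<in> normalizer G Ker"
  shows "conj_aut G H \<pi> z \<in> hom (PGL2\<lparr>carrier := \<Gamma>\<rparr>) (PGL2\<lparr>carrier := \<Gamma>\<rparr>)"
proof -
  have zG: "z \<in> carrier G" using z normalizer_iff[OF Ker_carrier] by auto
  let ?\<sigma> = "conj_aut G H \<pi> z"
  note \<sigma> = conj_aut_\<pi>[OF z]
  show ?thesis
  proof (rule homI)
    fix a assume "a \<in> carrier (PGL2\<lparr>carrier := \<Gamma>\<rparr>)"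
    then obtain h where "h \<in> H" "a = \<pi> h" using \<pi>_surj by auto
    then show "?\<sigma> a \<in> carrier (PGL2\<lparr>carrier := \<Gamma>\<rparr>)" using \<sigma> H_conj zG \<pi>_in by simp
  next
    fix a b assume "a \<in> carrier (PGL2\<lparr>carrier := \<Gamma>\<rparr>)" "b \<in> carrier (PGL2\<lparr>carrier := \<Gamma>\<rparr>)"
    then obtain h k where h: "h \<in> H" "a = \<pi> h" and k: "k \<in> H" "b = \<pi> k" using \<pi>_surj by auto
    have "a \<otimes>\<^bsub>PGL2\<lparr>carrier := \<Gamma>\<rparr>\<^esub> b = \<pi> (h \<otimes> k)" using h k \<pi>_mult by simp
    then have "?\<sigma> (a \<otimes>\<^bsub>PGL2\<lparr>carrier := \<Gamma>\<rparr>\<^esub> b) = \<pi> (z \<otimes> (h \<otimes> k) \<otimes> inv z)"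
      using \<sigma> subgroup.m_closed[OF H_sub h(1) k(1)] by simp
    also have "z \<otimes> (h \<otimes> k) \<otimes> inv z = (z \<otimes> h \<otimes> inv z) \<otimes> (z \<otimes> k \<otimes> inv z)"
      using zG h k H_carrier by (simp add: m_assoc)
    also have "\<pi> \<dots> = \<pi> (z \<otimes> h \<otimes> inv z) \<otimes>\<^bsub>PGL2\<^esub> \<pi> (z \<otimes> k \<otimes> inv z)"
      using \<pi>_mult H_conj zG h k by simp
    finally show "?\<sigma> (a \<otimes>\<^bsub>PGL2\<lparr>carrier := \<Gamma>\<rparr>\<^esub> b) = ?\<sigma> a \<otimes>\<^bsub>PGL2\<lparr>carrier := \<Gamma>\<rparr>\<^esub> ?\<sigma> b"
      using \<sigma> h k by simp
  qed
qed

lemma conj_aut_iso: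
  assumes z: "z \<in> normalizer G Ker"
  shows "conj_aut G H \<pi> z \<in> iso (PGL2\<lparr>carrier := \<Gamma>\<rparr>) (PGL2\<lparr>carrier := \<Gamma>\<rparr>)"
proof -
  have zG: "z \<in> carrier G" and zK: "\<And>k. k \<in> Ker \<Longrightarrow> inv z \<otimes> k \<otimes> z \<in> Ker"
    using z normalizer_iff[OF Ker_carrier] by auto
  let ?\<sigma> = "conj_aut G H \<pi> z"
  note \<sigma> = conj_aut_\<pi>[OF z]
  have hom: "?\<sigma> \<in> hom (PGL2\<lparr>carrier := \<Gamma>\<rparr>) (PGL2\<lparr>carrier := \<Gamma>\<rparr>)"
    by (rule conj_aut_hom[OF z])
  have "inj_on ?\<sigma> \<Gamma>"
  proof (rule inj_onI)
    fix a b assume ab: "a \<in> \<Gamma>" "b \<in> \<Gamma>" "?\<sigma> a = ?\<sigma> b"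
    then obtain h k where h: "h \<in> H" "a = \<pi> h" and k: "k \<in> H" "b = \<pi> k" using \<pi>_surj by auto
    have hc: "h \<in> carrier G" and kc: "k \<in> carrier G" using h k H_carrier by auto
    have "inv (z \<otimes> h \<otimes> inv z) \<otimes> (z \<otimes> k \<otimes> inv z) \<in> Ker"
      using \<pi>_eq_imp_Ker H_conj[OF zG h(1)] H_conj[OF zG k(1)] ab h k \<sigma> by simp
    moreover have "inv (z \<otimes> h \<otimes> inv z) \<otimes> (z \<otimes> k \<otimes> inv z) = z \<otimes> (inv h \<otimes> k) \<otimes> inv z"
      using zG hc kc by (simp add: inv_mult_group m_assoc)
    ultimately have "inv z \<otimes> (z \<otimes> (inv h \<otimes> k) \<otimes> inv z) \<otimes> z \<in> Ker" using zK by simp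
    then have "inv h \<otimes> k \<in> Ker" using zG hc kc by (simp add: m_assoc)
    then have "\<pi> (h \<otimes> (inv h \<otimes> k)) = \<pi> h" using \<pi>_mult_Ker h by blast
    then show "a = b" using h k hc kc by simp
  qed
  moreover have "?\<sigma> ` \<Gamma> = \<Gamma>"
  proof
    show "?\<sigma> ` \<Gamma> \<subseteq> \<Gamma>" using hom unfolding hom_def by auto
    show "\<Gamma> \<subseteq> ?\<sigma> ` \<Gamma>"
    proof
      fix a assume "a \<in> \<Gamma>"
      then obtain h where h: "h \<in> H" "a = \<pi> h" using \<pi>_surj by auto
      have "?\<sigma> (\<pi> (inv z \<otimes> h \<otimes> z)) = a"
        using \<sigma>[OF H_conj_inv[OF zG h(1)]] zG h H_carrier by (simp add: m_assoc)
      then show "a \<in> ?\<sigma> ` \<Gamma>" using \<pi>_in H_conj_inv[OF zG h(1)] by blast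
    qed
  qed
  ultimately show ?thesis using hom unfolding iso_def bij_betw_def by simp
qed

lemma iso_imp_normalizer:
  assumes z: "z \<in> carrier G" and iso: "rep_iso mscale mscale (G\<lparr>carrier := H\<rparr>) (conj_rep z) Xs Xr Xs"
  shows "z \<in> normalizer G Ker"
proof -
  obtain L where L: "bij_betw L Xs Xs"
    and L_comm: "\<And>h u. h \<in> H \<Longrightarrow> u \<in> Xs \<Longrightarrow> L (Xr (z \<otimes> h \<otimes> inv z) u) = Xr h (L u)"
    using iso unfolding rep_iso_def conj_rep_def by auto
  have L_in: "L u \<in> Xs" if "u \<in> Xs" for u using L that bij_betwE by blast
  have "z \<otimes> k \<otimes> inv z \<in> Ker" if k: "k \<in> Ker" for k
  proof -
    have kH: "k \<in> H" using k Ker_subset by blast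
    have "Xr (z \<otimes> k \<otimes> inv z) v = v" if v: "v \<in> Xs" for v
    proof -
      have "L (Xr (z \<otimes> k \<otimes> inv z) v) = L v" using L_comm[OF kH v] Ker_iff[OF kH] k L_in[OF v] by simp
      then show ?thesis using bij_betw_imp_inj_on[OF L] v Xr_in[OF H_conj[OF z kH] v] by (auto dest: inj_onD)
    qed
    then show ?thesis using Ker_iff H_conj[OF z kH] by blast
  qed
  moreover have "inv z \<otimes> k \<otimes> z \<in> Ker" if k: "k \<in> Ker" for k
  proof -
    have kH: "k \<in> H" using k Ker_subset by blast
    have e: "z \<otimes> (inv z \<otimes> k \<otimes> z) \<otimes> inv z = k" using z kH H_carrier by (simp add: m_assoc)
    have "Xr (inv z \<otimes> k \<otimes> z) w = w" if w: "w \<in> Xs" for w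
    proof -
      obtain u where u: "u \<in> Xs" "w = L u" using L w unfolding bij_betw_def by blast
      have "Xr (inv z \<otimes> k \<otimes> z) (L u) = L (Xr k u)" using L_comm[OF H_conj_inv[OF z kH] u(1)] e by simp
      then show ?thesis using Ker_iff[OF kH] k u by simp
    qed
    then show ?thesis using Ker_iff H_conj_inv[OF z kH] by blast
  qed
  ultimately show ?thesis using normalizer_iff[OF Ker_carrier] z by auto
qed

lemma N_iff:
  "z \<in> N \<longleftrightarrow> z \<in> carrier G \<and> rep_iso mscale mscale (G\<lparr>carrier := H\<rparr>) (conj_rep z) Xs Xr Xs"
proof
  assume zN: "z \<in> N"
  then have zK: "z \<in> normalizer G Ker" and A: "conj_aut G H \<pi> z \<in> Aut_Psi \<Gamma> Xs"
    unfolding Nsub_def by auto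
  have zG: "z \<in> carrier G" using zK normalizer_iff[OF Ker_carrier] by auto
  obtain T where T: "bij_betw T Xs Xs" "\<forall>x\<in>Xs. \<forall>y\<in>Xs. T (x + y) = T x + T y"
    "\<forall>c. \<forall>x\<in>Xs. T (mscale c x) = mscale c (T x)"
    "\<forall>a\<in>\<Gamma>. \<forall>x\<in>Xs. T (psi (conj_aut G H \<pi> z a) x) = psi a (T x)"
    using A unfolding Aut_Psi_def rep_iso_def by auto
  have "T (conj_rep z h u) = Xr h (T u)" if h: "h \<in> H" and u: "u \<in> Xs" for h u
  proof -
    have "T (psi (conj_aut G H \<pi> z (\<pi> h)) u) = psi (\<pi> h) (T u)" using T(4) \<pi>_in[OF h] u by blast
    then show ?thesis using conj_aut_\<pi>[OF zK h] unfolding conj_rep_def Xr_def by simp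
  qed
  then show "z \<in> carrier G \<and> rep_iso mscale mscale (G\<lparr>carrier := H\<rparr>) (conj_rep z) Xs Xr Xs"
    unfolding rep_iso_def using zG T by auto
next
  assume "z \<in> carrier G \<and> rep_iso mscale mscale (G\<lparr>carrier := H\<rparr>) (conj_rep z) Xs Xr Xs"
  then have zG: "z \<in> carrier G" and iso: "rep_iso mscale mscale (G\<lparr>carrier := H\<rparr>) (conj_rep z) Xs Xr Xs"
    by auto
  have zK: "z \<in> normalizer G Ker" by (rule iso_imp_normalizer[OF zG iso])
  obtain T where T: "bij_betw T Xs Xs" "\<forall>x\<in>Xs. \<forall>y\<in>Xs. T (x + y) = T x + T y"
    "\<forall>c. \<forall>x\<in>Xs. T (mscale c x) = mscale c (T x)"
    "\<forall>h\<in>H. \<forall>x\<in>Xs. T (conj_rep z h x) = Xr h (T x)"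
    using iso unfolding rep_iso_def by auto
  have "T (psi (conj_aut G H \<pi> z a) x) = psi a (T x)" if a: "a \<in> \<Gamma>" and x: "x \<in> Xs" for a x
  proof -
    obtain h where "h \<in> H" "a = \<pi> h" using \<pi>_surj a by auto
    then show ?thesis using T(4) x conj_aut_\<pi>[OF zK] unfolding conj_rep_def Xr_def by simp
  qed
  then have "rep_iso mscale mscale (PGL2\<lparr>carrier := \<Gamma>\<rparr>) (\<lambda>a. psi (conj_aut G H \<pi> z a)) Xs psi Xs"
    unfolding rep_iso_def using T by auto
  then show "z \<in> N" unfolding Nsub_def Aut_Psi_def using zK conj_aut_iso[OF zK] by blast
qed


text \<open>Consequently \<open>N\<close> is a subgroup of \<open>G\<close> containing \<open>H\<close>: isomorphism of conjugate
  representations is transitive and symmetric, and \<open>X\<^sup>h \<cong> X\<close> via \<open>X(h\<inverse>)\<close> for \<open>h \<in> H\<close>.\<close>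
lemma X_rep_H: "is_rep mscale (G\<lparr>carrier := H\<rparr>) Xr Xs"
  using irred_repD(1)[OF X_irr_H] .

lemma H_subset_N: "H \<subseteq> N"
proof
  fix h0 assume h0: "h0 \<in> H"
  have h0G: "h0 \<in> carrier G" and ih0: "inv h0 \<in> H"
    using h0 H_carrier subgroup.m_inv_closed[OF H_sub] by auto
  have "bij_betw (Xr (inv h0)) Xs Xs"
  proof (rule bij_betwI[of _ _ _ "Xr h0"])
    show "Xr (inv h0) \<in> Xs \<rightarrow> Xs" "Xr h0 \<in> Xs \<rightarrow> Xs" using Xr_in ih0 h0 by auto
    show "Xr h0 (Xr (inv h0) x) = x" if "x \<in> Xs" for x using Xr_inv[OF ih0 that] h0G by simp
    show "Xr (inv h0) (Xr h0 y) = y" if "y \<in> Xs" for y using Xr_inv[OF h0 that] .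
  qed
  moreover have "Xr (inv h0) (conj_rep h0 h u) = Xr h (Xr (inv h0) u)" if h: "h \<in> H" and u: "u \<in> Xs" for h u
  proof -
    have "Xr (inv h0) (conj_rep h0 h u) = Xr (inv h0 \<otimes> (h0 \<otimes> h \<otimes> inv h0)) u"
      unfolding conj_rep_def using Xr_mult[OF ih0 H_conj[OF h0G h] u] by simp
    also have "inv h0 \<otimes> (h0 \<otimes> h \<otimes> inv h0) = h \<otimes> inv h0" using h0G h H_carrier by (simp add: m_assoc)
    finally show ?thesis using Xr_mult[OF h ih0 u] by simp
  qed
  ultimately have "rep_iso mscale mscale (G\<lparr>carrier := H\<rparr>) (conj_rep h0) Xs Xr Xs"
    unfolding rep_iso_def using Xr_add Xr_scale by auto
  then show "h0 \<in> N" using N_iff h0G by blast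
qed

lemma N_subgroup: "subgroup N G"
proof (rule subgroupI)
  show "N \<subseteq> carrier G" using N_iff by blast
  show "N \<noteq> {}" using H_subset_N subgroup.one_closed[OF H_sub] by blast
next
  fix z assume "z \<in> N"
  then have z: "z \<in> carrier G" and iso: "rep_iso mscale mscale (G\<lparr>carrier := H\<rparr>) (conj_rep z) Xs Xr Xs"
    using N_iff by auto
  have "rep_iso mscale mscale (G\<lparr>carrier := H\<rparr>) Xr Xs (conj_rep (inv z)) Xs"
  proof (rule rep_iso_pullback[OF iso, where \<beta> = "\<lambda>h. inv z \<otimes> h \<otimes> z"])
    show "inv z \<otimes> h \<otimes> z \<in> carrier (G\<lparr>carrier := H\<rparr>)" if "h \<in> carrier (G\<lparr>carrier := H\<rparr>)" for h
      using H_conj_inv z that by simp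
    show "Xr h x = conj_rep z (inv z \<otimes> h \<otimes> z) x" if "h \<in> carrier (G\<lparr>carrier := H\<rparr>)" for h x
      using z that H_carrier by (simp add: conj_rep_def m_assoc)
    show "conj_rep (inv z) h y = Xr (inv z \<otimes> h \<otimes> z) y" for h y
      using z by (simp add: conj_rep_def)
  qed
  then have "rep_iso mscale mscale (G\<lparr>carrier := H\<rparr>) (conj_rep (inv z)) Xs Xr Xs"
    by (rule rep_iso_sym[OF X_rep_H])
  then show "inv z \<in> N" using N_iff z by auto
next
  fix z1 z2 assume "z1 \<in> N" "z2 \<in> N"
  then have z1: "z1 \<in> carrier G" and z2: "z2 \<in> carrier G"
    and iso1: "rep_iso mscale mscale (G\<lparr>carrier := H\<rparr>) (conj_rep z1) Xs Xr Xs"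
    and iso2: "rep_iso mscale mscale (G\<lparr>carrier := H\<rparr>) (conj_rep z2) Xs Xr Xs"
    using N_iff by auto
  have "rep_iso mscale mscale (G\<lparr>carrier := H\<rparr>) (conj_rep (z1 \<otimes> z2)) Xs (conj_rep z2) Xs"
  proof (rule rep_iso_pullback[OF iso1, where \<beta> = "\<lambda>h. z2 \<otimes> h \<otimes> inv z2"])
    show "z2 \<otimes> h \<otimes> inv z2 \<in> carrier (G\<lparr>carrier := H\<rparr>)" if "h \<in> carrier (G\<lparr>carrier := H\<rparr>)" for h
      using H_conj z2 that by simp
    show "conj_rep (z1 \<otimes> z2) h x = conj_rep z1 (z2 \<otimes> h \<otimes> inv z2) x"
      if "h \<in> carrier (G\<lparr>carrier := H\<rparr>)" for h x
      using z1 z2 that H_carrier by (simp add: conj_rep_def m_assoc inv_mult_group)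
    show "conj_rep z2 h y = Xr (z2 \<otimes> h \<otimes> inv z2) y" for h y
      by (simp add: conj_rep_def)
  qed
  then have "rep_iso mscale mscale (G\<lparr>carrier := H\<rparr>) (conj_rep (z1 \<otimes> z2)) Xs Xr Xs"
    using iso2 by (rule rep_iso_trans)
  then show "z1 \<otimes> z2 \<in> N" using N_iff z1 z2 by auto
qed

lemma intertwiner_imp_N:
  assumes z: "z \<in> carrier G"
    and T_in: "\<And>u. u \<in> Xs \<Longrightarrow> T u \<in> Xs"
    and T_add: "\<And>x y. x \<in> Xs \<Longrightarrow> y \<in> Xs \<Longrightarrow> T (x + y) = T x + T y"
    and T_scale: "\<And>c x. x \<in> Xs \<Longrightarrow> T (mscale c x) = mscale c (T x)"
    and T_comm: "\<And>h u. h \<in> H \<Longrightarrow> u \<in> Xs \<Longrightarrow> T (conj_rep z h u) = Xr h (T u)"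
    and nonzero: "u0 \<in> Xs" "T u0 \<noteq> 0"
  shows "z \<in> N"
proof -
  have "rep_iso mscale mscale (G\<lparr>carrier := H\<rparr>) (conj_rep z) Xs Xr Xs"
  proof (rule schur_iso[OF vector_space_mscale vector_space_mscale conj_rep_irr[OF z] X_irr_H
          T_in T_add T_scale _ nonzero])
    fix k x assume "k \<in> carrier (G\<lparr>carrier := H\<rparr>)" "x \<in> Xs"
    then show "T (conj_rep z k x) = Xr k (T x)" using T_comm by simp
  qed
  then show ?thesis using N_iff z by blast
qed


subsection \<open>Separation by matrix coefficients\<close>

lemma H_finite: "finite H"
  using finite_subset[OF subgroup.subset[OF H_sub] G_fin] .

lemma conj_rep_mult:
  assumes "z \<in> carrier G" "h \<in> H" "g \<in> H" "u \<in> Xs"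
  shows "conj_rep z h (conj_rep z g u) = conj_rep z (h \<otimes> g) u"
proof -
  have "(z \<otimes> h \<otimes> inv z) \<otimes> (z \<otimes> g \<otimes> inv z) = z \<otimes> (h \<otimes> g) \<otimes> inv z"
    using assms H_carrier by (simp add: m_assoc)
  moreover have "conj_rep z h (conj_rep z g u) = Xr ((z \<otimes> h \<otimes> inv z) \<otimes> (z \<otimes> g \<otimes> inv z)) u"
    unfolding conj_rep_def using Xr_mult[OF H_conj[OF assms(1,2)] H_conj[OF assms(1,3)] assms(4)] by simp
  ultimately show ?thesis by (simp add: conj_rep_def)
qed

text \<open>Averaging a fixed vector \<open>b0\<close> of \<open>X\<close> against one matrix coordinate of \<open>X\<^sup>z\<close>
  produces an intertwiner \<open>X\<^sup>z \<rightarrow> X\<close>.\<close>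
lemma averaged_intertwiner:
  assumes z: "z \<in> carrier G" and b0: "b0 \<in> Xs" and g: "g \<in> H" and u: "u \<in> Xs"
  shows "(\<Sum>h\<in>H. mscale (conj_rep z h (conj_rep z g u) $ i $ j) (Xr (inv h) b0))
       = Xr g (\<Sum>h\<in>H. mscale (conj_rep z h u $ i $ j) (Xr (inv h) b0))"
proof -
  define F where "F h = mscale (conj_rep z h u $ i $ j) (Xr (g \<otimes> inv h) b0)" for h
  have gG: "g \<in> carrier G" using g H_carrier by blast
  have "(\<Sum>h\<in>H. mscale (conj_rep z h (conj_rep z g u) $ i $ j) (Xr (inv h) b0)) = (\<Sum>h\<in>H. F (h \<otimes> g))"
  proof (rule sum.cong[OF refl])
    fix h assume h: "h \<in> H"
    have "g \<otimes> inv (h \<otimes> g) = inv h" using h gG H_carrier by (simp add: inv_mult_group)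
    then show "mscale (conj_rep z h (conj_rep z g u) $ i $ j) (Xr (inv h) b0) = F (h \<otimes> g)"
      unfolding F_def using conj_rep_mult[OF z h g u] by simp
  qed
  also have "\<dots> = (\<Sum>h\<in>H. F h)" by (rule sum_right_translate[OF H_sub g])
  also have "\<dots> = Xr g (\<Sum>h\<in>H. mscale (conj_rep z h u $ i $ j) (Xr (inv h) b0))"
    unfolding F_def Xr_sum Xr_scale
    using Xr_mult[OF g subgroup.m_inv_closed[OF H_sub] b0] by simp
  finally show ?thesis .
qed

text \<open>For \<open>z \<notin> N\<close> the matrix coefficients of \<open>X\<close> annihilate \<open>X\<^sup>z\<close>: by Schur's lemma the
  averaged intertwiners above all vanish.\<close>
lemma coeff_kills_conj:
  assumes z: "z \<in> carrier G" "z \<notin> N" and b0: "b0 \<in> Xs" and u: "u \<in> Xs"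
  shows "(\<Sum>h\<in>H. mscale (Xr (inv h) b0 $ k $ l) (conj_rep z h u)) = 0"
proof -
  note Xs = is_subspaceD[OF Xs_subspace]
  have conj_in: "conj_rep z h x \<in> Xs" if "h \<in> H" "x \<in> Xs" for h x
    unfolding conj_rep_def using Xr_in[OF H_conj[OF z(1) that(1)] that(2)] .
  have T_zero: "(\<Sum>h\<in>H. mscale (conj_rep z h u $ i $ j) (Xr (inv h) b0)) = 0" for i j
  proof (rule ccontr)
    define T where "T x = (\<Sum>h\<in>H. mscale (conj_rep z h x $ i $ j) (Xr (inv h) b0))" for x
    assume "(\<Sum>h\<in>H. mscale (conj_rep z h u $ i $ j) (Xr (inv h) b0)) \<noteq> 0"
    then have Tu: "T u \<noteq> 0" unfolding T_def .
    have "z \<in> N"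
    proof (rule intertwiner_imp_N[where T = T, OF z(1) _ _ _ _ u Tu])
      show "T x \<in> Xs" if "x \<in> Xs" for x
        unfolding T_def using Xr_in[OF subgroup.m_inv_closed[OF H_sub] b0] Xs
        by (intro is_subspace_sum[OF Xs_subspace]) auto
      show "T (x + y) = T x + T y" if "x \<in> Xs" "y \<in> Xs" for x y
        unfolding T_def conj_rep_def Xr_add by (simp add: mscale.scale_left_distrib sum.distrib)
      show "T (mscale c x) = mscale c (T x)" if "x \<in> Xs" for c x
        unfolding T_def conj_rep_def Xr_scale by (simp add: mscale.scale_sum_right)
      show "T (conj_rep z h x) = Xr h (T x)" if "h \<in> H" "x \<in> Xs" for h x
        unfolding T_def using averaged_intertwiner[OF z(1) b0 that] .
    qed
    then show False using z(2) by blast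
  qed
  show ?thesis
  proof (rule mat_eqI)
    fix i j
    have "(\<Sum>h\<in>H. mscale (Xr (inv h) b0 $ k $ l) (conj_rep z h u)) $ i $ j
        = (\<Sum>h\<in>H. mscale (conj_rep z h u $ i $ j) (Xr (inv h) b0)) $ k $ l"
      by (simp add: sum_entry mult.commute)
    then show "(\<Sum>h\<in>H. mscale (Xr (inv h) b0 $ k $ l) (conj_rep z h u)) $ i $ j = 0 $ i $ j"
      using T_zero by simp
  qed
qed

text \<open>On \<open>X\<close> itself the matrix coefficients do not all vanish on a given nonzero vector \<open>v\<close>:
  summed over a basis they reproduce \<open>|H| \<cdot> v\<close>.\<close>
lemma coeff_detects:
  assumes v: "v \<in> Xs" "v \<noteq> 0"
  shows "\<exists>b0\<in>Xs. \<exists>k l. (\<Sum>h\<in>H. mscale (Xr (inv h) b0 $ k $ l) (Xr h v)) \<noteq> 0"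
proof (rule ccontr)
  assume "\<not> ?thesis"
  then have zero: "\<And>b0 k l. b0 \<in> Xs \<Longrightarrow> (\<Sum>h\<in>H. mscale (Xr (inv h) b0 $ k $ l) (Xr h v)) = 0" by blast
  obtain B where B: "B \<subseteq> Xs" "mscale.independent B" "Xs \<subseteq> mscale.span B"
    using mscale.maximal_independent_subset by blast
  let ?r = "mscale.representation B"
  have Xv: "Xr h v \<in> Xs" if "h \<in> H" for h using Xr_in[OF that v(1)] .
  have span: "Xr h v \<in> mscale.span B" if "h \<in> H" for h using B(3) Xv[OF that] by blast
  note coord_sum = mscale.representation_linear_combination[OF B(2) span]
  have coord_zero: "(\<Sum>h\<in>H. mscale (?r (Xr h v) b) (Xr (inv h) b0)) = 0" if b0: "b0 \<in> Xs" for b0 b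
  proof (rule mat_eqI)
    fix k l
    have "(\<Sum>h\<in>H. mscale (?r (Xr h v) b) (Xr (inv h) b0)) $ k $ l
        = ?r (\<Sum>h\<in>H. mscale (Xr (inv h) b0 $ k $ l) (Xr h v)) b"
      by (simp add: sum_entry coord_sum mult.commute)
    then show "(\<Sum>h\<in>H. mscale (?r (Xr h v) b) (Xr (inv h) b0)) $ k $ l = 0 $ k $ l"
      using zero[OF b0] by (simp add: mscale.representation_zero)
  qed
  define F where "F = (\<Union>h\<in>H. {b. ?r (Xr h v) b \<noteq> 0})"
  have F: "finite F" unfolding F_def using H_finite mscale.finite_representation by blast
  have FB: "F \<subseteq> Xs" unfolding F_def using mscale.representation_ne_zero B(1) by blast
  have "0 = (\<Sum>b\<in>F. \<Sum>h\<in>H. mscale (?r (Xr h v) b) (Xr (inv h) b))"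
    using coord_zero FB by (simp add: subset_iff)
  also have "\<dots> = (\<Sum>h\<in>H. Xr (inv h) (\<Sum>b\<in>F. mscale (?r (Xr h v) b) b))"
    by (subst sum.swap) (simp add: Xr_sum Xr_scale)
  also have "\<dots> = (\<Sum>h\<in>H. Xr (inv h) (Xr h v))"
  proof (rule sum.cong[OF refl])
    fix h assume h: "h \<in> H"
    have "(\<Sum>b\<in>F. mscale (?r (Xr h v) b) b) = Xr h v"
      by (rule mscale.sum_representation_superset[OF B(2) subsetD[OF B(3) Xv[OF h]] F])
        (use h in \<open>auto simp: F_def\<close>)
    then show "Xr (inv h) (\<Sum>b\<in>F. mscale (?r (Xr h v) b) b) = Xr (inv h) (Xr h v)" by simp
  qed
  also have "\<dots> = (\<Sum>h\<in>H. v)" using Xr_inv v(1) by simp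
  also have "\<dots> = mscale (of_nat (card H)) v" by (rule mscale.sum_constant_scale)
  finally have "mscale (of_nat (card H)) v = 0" by simp
  moreover have "card H \<noteq> 0" using H_finite subgroup.one_closed[OF H_sub] by auto
  ultimately show False using v(2) by simp
qed

lemma cutoff_to_N:
  assumes a: "a \<in> ind_space G H (carrier G) Xr Xs" "a \<one> \<noteq> 0"
  obtains c where "\<And>z. z \<notin> N \<Longrightarrow> alg_act G (carrier G) H mscale c a z = 0"
    and "alg_act G (carrier G) H mscale c a \<one> \<noteq> 0"
proof -
  obtain b0 k l where b0: "b0 \<in> Xs"
    and nz: "(\<Sum>h\<in>H. mscale (Xr (inv h) b0 $ k $ l) (Xr h (a \<one>))) \<noteq> 0"
    using coeff_detects[OF ind_spaceD(2)[OF a(1) one_closed] a(2)] by blast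
  define c where "c h = Xr (inv h) b0 $ k $ l" for h
  have val: "alg_act G (carrier G) H mscale c a z = (\<Sum>h\<in>H. mscale (c h) (conj_rep z h (a z)))"
    if z: "z \<in> carrier G" for z
  proof -
    have "a (z \<otimes> h) = conj_rep z h (a z)" if h: "h \<in> H" for h
    proof -
      have "z \<otimes> h = (z \<otimes> h \<otimes> inv z) \<otimes> z" using z h H_carrier by (simp add: m_assoc)
      then show ?thesis using ind_spaceD(3)[OF a(1) H_conj[OF z h] z] by (simp add: conj_rep_def)
    qed
    then show ?thesis using z by (simp add: alg_act_apply)
  qed
  show ?thesis
  proof (rule that)
    show "alg_act G (carrier G) H mscale c a z = 0" if z: "z \<notin> N" for z
    proof (cases "z \<in> carrier G")
      case True
      then show ?thesis
        using val coeff_kills_conj[OF True z b0 ind_spaceD(2)[OF a(1) True]] by (simp add: c_def)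
    qed (simp add: alg_act_apply)
    have "conj_rep \<one> h = Xr h" if "h \<in> H" for h using that H_carrier by (simp add: conj_rep_def)
    then show "alg_act G (carrier G) H mscale c a \<one> \<noteq> 0" using val[OF one_closed] nz by (simp add: c_def)
  qed
qed

theorem ind_N_irreducible:
  assumes U_sub: "U \<subseteq> ind_space G H N Xr Xs"
    and U_irr: "irred_rep (fscale mscale) (G\<lparr>carrier := N\<rparr>) (ind_act G N) U"
  shows "irred_rep (fscale (fscale mscale)) G (ind_act G (carrier G))
           (ind_space G N (carrier G) (ind_act G N) U)"
proof (rule ind_irred_criterion[OF G_fin vector_space_fscale[OF vector_space_mscale] N_subgroup U_irr])
  let ?W = "ind_space G N (carrier G) (ind_act G N) U"
  fix T
  assume T: "invariant_subspace (fscale (fscale mscale)) G (ind_act G (carrier G)) ?W T"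
    and ne: "T \<noteq> {0}"
  have TW: "T \<subseteq> ?W" and Tsub: "is_subspace (fscale (fscale mscale)) T"
    and Tact: "\<And>g f. g \<in> carrier G \<Longrightarrow> f \<in> T \<Longrightarrow> ind_act G (carrier G) g f \<in> T"
    using T unfolding invariant_subspace_def by simp_all
  obtain f where "f \<in> T" "f \<noteq> 0" using ne is_subspaceD(1)[OF Tsub] by blast
  then obtain f1 where f1: "f1 \<in> T" "f1 \<one> \<one> \<noteq> 0"
    by (rule ind_shift_nonzero[OF N_subgroup U_sub T]) blast
  have "(\<lambda>z. f1 z \<one>) \<in> ind_space G H (carrier G) Xr Xs"
    using ind_ind_eval[OF N_subgroup H_subset_N U_sub] f1(1) TW by blast
  then obtain c where c: "\<And>z. z \<notin> N \<Longrightarrow> alg_act G (carrier G) H mscale c (\<lambda>z. f1 z \<one>) z = 0"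
    "alg_act G (carrier G) H mscale c (\<lambda>z. f1 z \<one>) \<one> \<noteq> 0"
    using f1(2) by (rule cutoff_to_N) blast
  define f2 where "f2 = alg_act G (carrier G) H (fscale mscale) c f1"
  have f2T: "f2 \<in> T" unfolding f2_def using Tsub Tact H_carrier f1(1) by (intro alg_act_mem) auto
  have ev2: "f2 z \<one> = alg_act G (carrier G) H mscale c (\<lambda>z. f1 z \<one>) z" for z
    using fun_cong[OF eval_alg_act[of G "carrier G" H mscale c f1 \<one>], of z] unfolding f2_def by simp
  have "f2 x = 0" if "x \<notin> N" for x
    using ind_supported_of_eval[OF N_subgroup subsetD[OF TW f2T] U_sub _ that] ev2 c(1) by simp
  then have "f2 \<one> \<in> local_part G N T" by (rule local_partI[OF f2T])
  moreover have "f2 \<one> \<noteq> 0" using c(2) ev2[of \<one>] by (metis zero_fun_apply)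
  ultimately show "local_part G N T \<noteq> {0}" by blast
qed

lemma restr_N_sub:
  assumes V_sub: "V \<subseteq> ind_space G H (carrier G) Xr Xs"
  shows "restr N ` V \<subseteq> ind_space G H N Xr Xs"
proof
  have NG: "N \<subseteq> carrier G" using subgroup.subset[OF N_subgroup] .
  fix u assume "u \<in> restr N ` V"
  then obtain a where a: "a \<in> V" "u = restr N a" by blast
  have aX: "a \<in> ind_space G H (carrier G) Xr Xs" using a(1) V_sub by blast
  show "u \<in> ind_space G H N Xr Xs"
  proof (rule ind_spaceI)
    show "u x = 0" if "x \<notin> N" for x using that a(2) by (simp add: restr_def)
    show "u x \<in> Xs" if "x \<in> N" for x using that a(2) ind_spaceD(2)[OF aX] NG by (auto simp: restr_def)
    show "u (h \<otimes> x) = Xr h (u x)" if "h \<in> H" "x \<in> N" for h x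
      using that a(2) ind_spaceD(3)[OF aX] NG H_subset_N subgroup.m_closed[OF N_subgroup]
      by (auto simp: restr_def)
  qed
qed

text \<open>The restriction to \<open>N\<close> of an irreducible constituent of \<open>Ind_H^G X\<close> is irreducible: the
  cut-off turns any nonzero element of an invariant subspace into a nonzero element of the
  constituent supported on \<open>N\<close>.\<close>
lemma restr_N_irreducible:
  assumes V_sub: "V \<subseteq> ind_space G H (carrier G) Xr Xs"
    and V_irr: "irred_rep (fscale mscale) G (ind_act G (carrier G)) V"
  shows "irred_rep (fscale mscale) (G\<lparr>carrier := N\<rparr>) (ind_act G N) (restr N ` V)"
proof -
  note Vrep = irred_repD(1)[OF V_irr]
  have "T = restr N ` V"
    if T: "invariant_subspace (fscale mscale) (G\<lparr>carrier := N\<rparr>) (ind_act G N) (restr N ` V) T"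
      and ne: "T \<noteq> {0}" for T
  proof -
    have TU: "T \<subseteq> restr N ` V" and Tsub: "is_subspace (fscale mscale) T"
      and Tact: "\<And>n u. n \<in> N \<Longrightarrow> u \<in> T \<Longrightarrow> ind_act G N n u \<in> T"
      using T unfolding invariant_subspace_def by simp_all
    obtain u where "u \<in> T" "u \<noteq> 0" using ne is_subspaceD(1)[OF Tsub] by blast
    then obtain a1 where a1: "a1 \<in> V" "restr N a1 \<in> T" "a1 \<one> \<noteq> 0"
      by (rule restr_shift_nonzero[OF N_subgroup Vrep T]) blast
    obtain c where c: "\<And>z. z \<notin> N \<Longrightarrow> alg_act G (carrier G) H mscale c a1 z = 0"
      "alg_act G (carrier G) H mscale c a1 \<one> \<noteq> 0"
      by (rule cutoff_to_N[OF subsetD[OF V_sub a1(1)] a1(3)]) blast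
    define a2 where "a2 = alg_act G (carrier G) H mscale c a1"
    have "a2 \<in> V" unfolding a2_def using is_repD(1,2)[OF Vrep] H_carrier a1(1) by (intro alg_act_mem) auto
    moreover have "a2 \<noteq> 0" using c(2) unfolding a2_def by auto
    moreover have "restr N a2 \<in> T"
      unfolding a2_def restr_alg_act[where sc = mscale, OF N_subgroup H_subset_N mscale.scale_zero_right]
      using Tsub Tact H_subset_N a1(2) by (intro alg_act_mem) auto
    ultimately have "restr N ` V \<subseteq> T"
      using restr_generates[OF N_subgroup _ V_irr T] c(1) unfolding a2_def by simp
    then show ?thesis using TU by blast
  qed
  then show ?thesis
    unfolding irred_rep_def
    using restr_rep[OF N_subgroup _ Vrep] restr_image_nonzero[OF N_subgroup Vrep irred_repD(2)[OF V_irr] V_sub]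
    by auto
qed

text \<open>Part (2): every irreducible constituent \<open>V\<close> of \<open>Ind_H^G X\<close> is induced from the irreducible
  constituent \<open>Res_N V\<close> of \<open>Ind_H^N X\<close>, via the Frobenius map.\<close>
theorem ind_H_irreducible_constituent:
  assumes V_sub: "V \<subseteq> ind_space G H (carrier G) Xr Xs"
    and V_irr: "irred_rep (fscale mscale) G (ind_act G (carrier G)) V"
  shows "\<exists>U. U \<subseteq> ind_space G H N Xr Xs
           \<and> irred_rep (fscale mscale) (G\<lparr>carrier := N\<rparr>) (ind_act G N) U
           \<and> rep_iso (fscale mscale) (fscale (fscale mscale)) G (ind_act G (carrier G)) V
                (ind_act G (carrier G)) (ind_space G N (carrier G) (ind_act G N) U)"
proof (intro exI conjI)
  have V_supp: "a x = 0" if "a \<in> V" "x \<notin> carrier G" for a x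
    using ind_spaceD(1)[OF subsetD[OF V_sub that(1)] that(2)] .
  show "restr N ` V \<subseteq> ind_space G H N Xr Xs" by (rule restr_N_sub[OF V_sub])
  show irr: "irred_rep (fscale mscale) (G\<lparr>carrier := N\<rparr>) (ind_act G N) (restr N ` V)"
    by (rule restr_N_irreducible[OF V_sub V_irr])
  show "rep_iso (fscale mscale) (fscale (fscale mscale)) G (ind_act G (carrier G)) V
          (ind_act G (carrier G)) (ind_space G N (carrier G) (ind_act G N) (restr N ` V))"
    by (rule frobenius_map_iso[where sc = mscale, OF N_subgroup vector_space_mscale V_irr _
          ind_N_irreducible[OF restr_N_sub[OF V_sub] irr]]) (rule V_supp)
qed

end

theorem lemma4p7:
  fixes G :: "'g monoid"
    and H :: "'g set"
    and \<Gamma> :: "('e::field_char_0^2^2) set set"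
    and Xs :: "('e^2^2) set"
    and \<pi> :: "'g \<Rightarrow> ('e^2^2) set"
  assumes E_closed: "alg_closed TYPE('e)"
    and \<Gamma>_sub: "subgroup \<Gamma> PGL2"
    and \<Gamma>_fin: "finite \<Gamma>"
    and \<Gamma>_irr: "proj_irreducible \<Gamma>"
    and \<Gamma>_type: "PGL2\<lparr>carrier := \<Gamma>\<rparr> \<cong> alt_group 4 \<or> PGL2\<lparr>carrier := \<Gamma>\<rparr> \<cong> sym_group 4
                  \<or> PGL2\<lparr>carrier := \<Gamma>\<rparr> \<cong> alt_group 5
                  \<or> (\<exists>n. odd n \<and> n \<ge> 3 \<and> PGL2\<lparr>carrier := \<Gamma>\<rparr> \<cong> dihedral_group n)"
    and X_W: "Xs \<subseteq> Wsp"
    and X_irr: "irred_rep mscale (PGL2\<lparr>carrier := \<Gamma>\<rparr>) psi Xs"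
    and X_faithful: "\<forall>a\<in>\<Gamma>. (\<forall>M\<in>Xs. psi a M = M) \<longrightarrow> a = \<one>\<^bsub>PGL2\<^esub>"
    and G_grp: "group G"
    and G_fin: "finite (carrier G)"
    and H_nrm: "H \<lhd> G"
    and \<pi>_hom: "\<pi> \<in> hom (G\<lparr>carrier := H\<rparr>) (PGL2\<lparr>carrier := \<Gamma>\<rparr>)"
    and \<pi>_surj: "\<pi> ` H = \<Gamma>"
  shows
    "(\<forall>U. U \<subseteq> ind_space G H (Nsub G H \<pi> \<Gamma> Xs) (\<lambda>h. psi (\<pi> h)) Xs
         \<and> irred_rep (fscale mscale) (G\<lparr>carrier := Nsub G H \<pi> \<Gamma> Xs\<rparr>)
              (ind_act G (Nsub G H \<pi> \<Gamma> Xs)) U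
       \<longrightarrow> irred_rep (fscale (fscale mscale)) G (ind_act G (carrier G))
              (ind_space G (Nsub G H \<pi> \<Gamma> Xs) (carrier G) (ind_act G (Nsub G H \<pi> \<Gamma> Xs)) U))
   \<and> (\<forall>V'. V' \<subseteq> ind_space G H (carrier G) (\<lambda>h. psi (\<pi> h)) Xs
         \<and> irred_rep (fscale mscale) G (ind_act G (carrier G)) V'
       \<longrightarrow> (\<exists>U. U \<subseteq> ind_space G H (Nsub G H \<pi> \<Gamma> Xs) (\<lambda>h. psi (\<pi> h)) Xs
             \<and> irred_rep (fscale mscale) (G\<lparr>carrier := Nsub G H \<pi> \<Gamma> Xs\<rparr>)
                  (ind_act G (Nsub G H \<pi> \<Gamma> Xs)) U
             \<and> rep_iso (fscale mscale) (fscale (fscale mscale)) G (ind_act G (carrier G)) V'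
                  (ind_act G (carrier G))
                  (ind_space G (Nsub G H \<pi> \<Gamma> Xs) (carrier G) (ind_act G (Nsub G H \<pi> \<Gamma> Xs)) U)))"
proof -
  interpret gamma_cover G H \<Gamma> Xs \<pi>
    using G_grp \<Gamma>_sub X_irr X_faithful G_fin H_nrm \<pi>_hom \<pi>_surj
    by (simp add: gamma_cover_def gamma_cover_axioms_def)
  have Xr: "(\<lambda>h. psi (\<pi> h)) = Xr" by (simp add: Xr_def fun_eq_iff)
  show ?thesis
    unfolding Xr
  proof (intro conjI allI impI)
    show "irred_rep (fscale (fscale mscale)) G (ind_act G (carrier G)) (ind_space G N (carrier G) (ind_act G N) U)"
      if "U \<subseteq> ind_space G H N Xr Xs \<and> irred_rep (fscale mscale) (G\<lparr>carrier := N\<rparr>) (ind_act G N) U" for U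
      using that by (intro ind_N_irreducible) auto
    show "\<exists>U. U \<subseteq> ind_space G H N Xr Xs \<and> irred_rep (fscale mscale) (G\<lparr>carrier := N\<rparr>) (ind_act G N) U
            \<and> rep_iso (fscale mscale) (fscale (fscale mscale)) G (ind_act G (carrier G)) V'
                (ind_act G (carrier G)) (ind_space G N (carrier G) (ind_act G N) U)"
      if "V' \<subseteq> ind_space G H (carrier G) Xr Xs \<and> irred_rep (fscale mscale) G (ind_act G (carrier G)) V'"
      for V'
      using that by (intro ind_H_irreducible_constituent) auto
  qed
qed

end
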